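(* Assume the setting below and let $\lambda>0$ with $\mu_+(\max\{\lambda,1\})\le1$. Assume (A1), (A4), (A5), (A6). If $r$ is a regular equilibrium solution with $r(1)=\lambda$, then $$\alpha_0(\rho,r(\rho))\,\tau(\rho)\le r'(\rho)\le\alpha_1(\rho,r(\rho))\,\tau(\rho)\qquad\text{for all }\rho\in(0,1].$$
   Context: Setting: $n\ge2$; $\kappa$ continuous on $[0,\infty)$, $\kappa_\pm=\max\{\pm\kappa,0\}$, $\mu_\pm(\lambda)=\int_0^\lambda s\kappa_\pm(s)ds$; $f$ solves $f''+\kappa f=0$, $f(0)=0$, $f'(0)=1$. Let $\phi,h:(0,\infty)\to\mathbb R$ and $\Phi(v_1,\dots,v_n)=\sum_{i=1}^n\phi(v_i)+h(v_1\cdots v_n)$. For a function $r$ on $(0,1]$ put $\tau(\rho)=f(r(\rho))/f(\rho)$. An equilibrium solution with $r(1)=\lambda$ is $r\in C^1(0,1]$, twice differentiable on $(0,1)$, with $r'>0$ on $(0,1]$, $r(0):=\lim_{\rho\to0^+}r(\rho)\ge0$, $r(1)=\lambda$, and for $\rho\in(0,1)$ $$f(\rho)\big[\phi''(r')+h''(r'\tau^{n-1})\tau^{2(n-1)}\big]r''=(n-1)\big[f'(r)\phi'(\tau)-f'(\rho)\phi'(r')\big]-(n-1)\big(f'(r)r'-f'(\rho)\tau\big)h''(r'\tau^{n-1})\,r'\tau^{2n-3}$$ (with $r=r(\rho)$, $r'=r'(\rho)$, $\tau=\tau(\rho)$). It is regular if $r(0)=0$. Assumptions: (A1) $h$ is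 $C^2$ and strictly convex. (A4) $\phi:(0,\infty)\to(0,\infty)$ is $C^2$ and convex. (A5) $v\mapsto v\phi'(v)$ is increasing. (A6) there is $t_0\ge0$ with $\phi'(t_0)=0$; with $q_1(s)=\sup_{v>t_0}\phi'(v)/\phi'(sv)$ for $s\ge1$ and $q_0(s)=\inf_{v>t_0/s}\phi'(v)/\phi'(sv)$ for $s\in(0,1]$, one has $q_1\in C^1[1,\infty)$, $q_0\in C^1(0,1]$, $\lim_{s\to\infty}q_1(s)=0$, $\lim_{s\to0^+}q_0(s)=\infty$, $q_1'<0$ on $[1,\infty)$ and $q_0'<0$ on $(0,1]$ (so $q_1(1)=q_0(1)=1$ and $q_1^{-1}:(0,1]\to[1,\infty)$, $q_0^{-1}:[1,\infty)\to(0,1]$ exist). Notation: $b_0(\rho)=\min_{0\le s\le\rho}f'(s)$, $b_1(\rho)=\max_{0\le s\le\rho}f'(s)$; $\alpha_1(\rho,s)=\max\{b_1(\rho)/b_0(s),\,q_1^{-1}(b_0(\rho)/b_1(s))\}$ and $\alpha_0(\rho,s)=\min\{b_0(\rho)/b_1(s),\,q_0^{-1}(b_1(\rho)/b_0(s))\}$ for $(\rho,s)\in[0,1]\times[0,\lambda]$. *)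

theory Defs
  imports "HOL-Analysis.Analysis"
begin

definition strictly_convex_on :: "real set \<Rightarrow> (real \<Rightarrow> real) \<Rightarrow> bool" where
  "strictly_convex_on S g \<longleftrightarrow> convex S \<and>
     (\<forall>x\<in>S. \<forall>y\<in>S. x \<noteq> y \<longrightarrow> (\<forall>t. 0 < t \<and> t < 1 \<longrightarrow>
        g ((1 - t) * x + t * y) < (1 - t) * g x + t * g y))"

definition kappa_plus :: "(real \<Rightarrow> real) \<Rightarrow> real \<Rightarrow> real" where
  "kappa_plus \<kappa> s = max (\<kappa> s) 0"

definition mu_plus :: "(real \<Rightarrow> real) \<Rightarrow> real \<Rightarrow> real" where
  "mu_plus \<kappa> l = integral {0..l} (\<lambda>s. s * kappa_plus \<kappa> s)"

text \<open>b0(rho) = min of f' on [0,rho], b1(rho) = max of f' on [0,rho]; f1 is f'.\<close>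
definition b0 :: "(real \<Rightarrow> real) \<Rightarrow> real \<Rightarrow> real" where
  "b0 f1 \<rho> = Inf (f1 ` {0..\<rho>})"

definition b1 :: "(real \<Rightarrow> real) \<Rightarrow> real \<Rightarrow> real" where
  "b1 f1 \<rho> = Sup (f1 ` {0..\<rho>})"

text \<open>q1, q0 from (A6); phi1 is phi'.\<close>
definition q1 :: "(real \<Rightarrow> real) \<Rightarrow> real \<Rightarrow> real \<Rightarrow> real" where
  "q1 phi1 t0 s = (SUP v\<in>{t0<..}. phi1 v / phi1 (s * v))"

definition q0 :: "(real \<Rightarrow> real) \<Rightarrow> real \<Rightarrow> real \<Rightarrow> real" where
  "q0 phi1 t0 s = (INF v\<in>{t0 / s<..}. phi1 v / phi1 (s * v))"

text \<open>Inverses q1^{-1} : (0,1] \<rightarrow> [1,\<infinity>) and q0^{-1} : [1,\<infinity>) \<rightarrow> (0,1].\<close>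
definition q1_inv :: "(real \<Rightarrow> real) \<Rightarrow> real \<Rightarrow> real \<Rightarrow> real" where
  "q1_inv phi1 t0 y = (THE s. 1 \<le> s \<and> q1 phi1 t0 s = y)"

definition q0_inv :: "(real \<Rightarrow> real) \<Rightarrow> real \<Rightarrow> real \<Rightarrow> real" where
  "q0_inv phi1 t0 y = (THE s. 0 < s \<and> s \<le> 1 \<and> q0 phi1 t0 s = y)"

definition alpha1 :: "(real \<Rightarrow> real) \<Rightarrow> (real \<Rightarrow> real) \<Rightarrow> real \<Rightarrow> real \<Rightarrow> real \<Rightarrow> real" where
  "alpha1 f1 phi1 t0 \<rho> s =
     max (b1 f1 \<rho> / b0 f1 s) (q1_inv phi1 t0 (b0 f1 \<rho> / b1 f1 s))"

definition alpha0 :: "(real \<Rightarrow> real) \<Rightarrow> (real \<Rightarrow> real) \<Rightarrow> real \<Rightarrow> real \<Rightarrow> real \<Rightarrow> real" where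
  "alpha0 f1 phi1 t0 \<rho> s =
     min (b0 f1 \<rho> / b1 f1 s) (q0_inv phi1 t0 (b1 f1 \<rho> / b0 f1 s))"

definition tau :: "(real \<Rightarrow> real) \<Rightarrow> (real \<Rightarrow> real) \<Rightarrow> real \<Rightarrow> real" where
  "tau f r \<rho> = f (r \<rho>) / f \<rho>"

end

theory Submission
  imports Defs
begin

text \<open>Write \<open>G = r'/\<tau>\<close>. Where \<open>G > \<alpha>\<^sub>1(\<rho>, r(\<rho>))\<close> on an interval \<open>(a, \<rho>]\<close>, the bounds
  \<open>b\<^sub>0 \<le> f' \<le> b\<^sub>1\<close> and the definition of \<open>q\<^sub>1\<close> give \<open>R = f'(r) \<phi>'(\<tau>) - f'(\<rho>) \<phi>'(r') \<le> 0\<close>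
  and \<open>\<tau>' > 0\<close>. Read as an identity for the derivative of
  \<open>N = h'(r' \<tau>\<^sup>n\<^sup>-\<^sup>1) + \<phi>'(r') / \<tau>\<^sup>n\<^sup>-\<^sup>1\<close>, the equilibrium equation then forbids \<open>r'' > 0\<close>, because
  \<open>h'\<close> is strictly increasing. So \<open>r'\<close> decreases and \<open>\<tau>\<close> increases, and \<open>G\<close> decreases on
  \<open>(a, \<rho>]\<close>: it cannot have crossed \<open>\<alpha>\<^sub>1\<close> at some \<open>a > 0\<close>, and if \<open>G > \<alpha>\<^sub>1\<close> on all of
  \<open>(0, \<rho>]\<close> then \<open>r\<close> is concave there, so \<open>G(x) \<le> (f(x)/x) / (f(r(x))/r(x)) \<rightarrow> 1 \<le> \<alpha>\<^sub>1\<close> as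
  \<open>x \<rightarrow> 0\<close>. The lower bound is symmetric. The hypothesis \<open>\<mu>\<^sub>+(max \<lambda> 1) \<le> 1\<close> keeps \<open>f'\<close>
  positive on \<open>[0, max \<lambda> 1]\<close> by a Sturm comparison, so that \<open>b\<^sub>0 > 0\<close> and \<open>\<tau> > 0\<close>.\<close>

lemma convex_on_deriv_mono:
  fixes F F' :: "real \<Rightarrow> real"
  assumes "convex_on S F" "open S" "x \<in> S" "y \<in> S" "x \<le> y"
    and "(F has_real_derivative F' x) (at x)" "(F has_real_derivative F' y) (at y)"
  shows "F' x \<le> F' y"
proof -
  have conn: "connected S"
    using assms(1) by (simp add: convex_on_def convex_connected)
  have "F' x * (y - x) \<le> F y - F x"
    by (rule convex_on_imp_above_tangent[OF assms(1) conn])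
       (use assms in \<open>auto simp: interior_open has_field_derivative_at_within\<close>)
  moreover have "F' y * (x - y) \<le> F x - F y"
    by (rule convex_on_imp_above_tangent[OF assms(1) conn])
       (use assms in \<open>auto simp: interior_open has_field_derivative_at_within\<close>)
  ultimately have "F' x * (y - x) \<le> F' y * (y - x)"
    by (simp add: algebra_simps)
  then show ?thesis
    using assms(5) by (cases "x = y") auto
qed

lemma strictly_convex_onD:
  assumes "strictly_convex_on S g" "x \<in> S" "y \<in> S" "x \<noteq> y" "0 < t" "t < 1"
  shows "g ((1 - t) * x + t * y) < (1 - t) * g x + t * g y"
  using assms unfolding strictly_convex_on_def by blast

lemma strictly_convex_on_imp_convex_on:
  assumes "strictly_convex_on S g"
  shows "convex_on S g"
proof (rule convex_onI)
  show "convex S"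
    using assms by (simp add: strictly_convex_on_def)
  fix t x y :: real assume "0 < t" "t < 1" "x \<in> S" "y \<in> S"
  then show "g ((1 - t) *\<^sub>R x + t *\<^sub>R y) \<le> (1 - t) * g x + t * g y"
    using strictly_convex_onD[OF assms, of x y t] by (cases "x = y") (auto simp: scaleR_collapse left_diff_distrib)
qed

lemma strictly_convex_on_deriv_strict_mono:
  fixes F F' :: "real \<Rightarrow> real"
  assumes strict: "strictly_convex_on S F" and "open S" "x \<in> S" "y \<in> S" "x < y"
    and "(F has_real_derivative F' x) (at x)" "(F has_real_derivative F' y) (at y)"
  shows "F' x < F' y"
proof -
  have convex: "convex_on S F"
    using strict by (rule strictly_convex_on_imp_convex_on)
  have "convex S" and conn: "connected S"
    using convex by (auto simp: convex_on_def convex_connected)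
  define m where "m = (1 - 1/2) * x + 1/2 * y"
  have m: "m \<in> S"
    using convexD[OF \<open>convex S\<close> assms(3,4), of "1/2" "1/2"] by (simp add: m_def)
  have "F' x * (m - x) \<le> F m - F x"
    using convex_on_imp_above_tangent[OF convex conn _ m has_field_derivative_at_within[OF assms(6)]]
    using assms(2,3) by (simp add: interior_open)
  moreover have "F' y * (m - y) \<le> F m - F y"
    using convex_on_imp_above_tangent[OF convex conn _ m has_field_derivative_at_within[OF assms(7)]]
    using assms(2,4) by (simp add: interior_open)
  moreover have "F m < (1 - 1/2) * F x + 1/2 * F y"
    unfolding m_def using strictly_convex_onD[OF strict assms(3,4), of "1/2"] assms(5) by simp
  ultimately have "F' x * (y - x) < F' y * (y - x)"
    by (simp add: m_def field_simps)
  then show ?thesis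
    using assms(5) by simp
qed

lemma mono_on_strict_if_deriv_pos:
  fixes g :: "real \<Rightarrow> real"
  assumes "mono_on {a..b} g" "a < c" "c < b" "(g has_real_derivative D) (at c)" "0 < D"
  shows "g a < g b"
proof -
  obtain d where "0 < d" and d: "\<And>h. 0 < h \<Longrightarrow> h < d \<Longrightarrow> g c < g (c + h)"
    using DERIV_pos_inc_right[OF assms(4,5)] by blast
  define h where "h = min d (b - c) / 2"
  have h: "0 < h" "h < d" "c + h \<le> b"
    using \<open>0 < d\<close> assms(3) by (auto simp: h_def min_def field_simps)
  have "g a \<le> g c"
    using assms(1-3) by (auto intro: mono_onD)
  also have "g c < g (c + h)"
    using d h by blast
  also have "g (c + h) \<le> g b"
    using assms(1-3) h by (auto intro: mono_onD)
  finally show ?thesis .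
qed

lemma pos_by_continuous_induction:
  fixes g :: "real \<Rightarrow> real"
  assumes cont: "continuous_on {a..b} g" and "0 < g a"
    and step: "\<And>x. a < x \<Longrightarrow> x \<le> b \<Longrightarrow> (\<And>s. a \<le> s \<Longrightarrow> s < x \<Longrightarrow> 0 < g s) \<Longrightarrow> 0 < g x"
    and x: "a \<le> x" "x \<le> b"
  shows "0 < g x"
proof (rule ccontr)
  assume "\<not> 0 < g x"
  define S where "S = {a..b} \<inter> g -` {..0}"
  have "closed S"
    unfolding S_def by (rule continuous_closed_preimage[OF cont]) auto
  moreover have "x \<in> S" "bdd_below S"
    using x \<open>\<not> 0 < g x\<close> by (auto simp: S_def intro: bdd_belowI[of _ a])
  ultimately have Inf_S: "Inf S \<in> S"
    using closed_contains_Inf by blast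
  have "0 < g s" if "a \<le> s" "s < Inf S" for s
    using that cInf_lower[OF _ \<open>bdd_below S\<close>, of s] Inf_S by (force simp: S_def)
  moreover have "a < Inf S"
    using Inf_S \<open>0 < g a\<close> by (auto simp: S_def order.order_iff_strict)
  ultimately have "0 < g (Inf S)"
    using step Inf_S by (auto simp: S_def)
  then show False
    using Inf_S by (simp add: S_def)
qed

lemma last_crossing_above:
  fixes g :: "real \<Rightarrow> real"
  assumes cont: "continuous_on {0<..b} g" and "0 < b" "c < g b"
  obtains a where "0 \<le> a" "a < b" "\<And>z. a < z \<Longrightarrow> z \<le> b \<Longrightarrow> c < g z" "0 < a \<Longrightarrow> g a \<le> c"
proof (cases "\<exists>x. 0 < x \<and> x < b \<and> g x \<le> c")
  case True
  then obtain x where x: "0 < x" "x < b" "g x \<le> c"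
    by blast
  define S where "S = {x..b} \<inter> g -` {..c}"
  have "closed S"
    unfolding S_def by (rule continuous_closed_preimage[OF continuous_on_subset[OF cont]])
      (use x in auto)
  moreover have "x \<in> S" "bdd_above S"
    using x by (auto simp: S_def intro: bdd_aboveI[of _ b])
  ultimately have Sup_S: "Sup S \<in> S"
    using closed_contains_Sup by blast
  have "Sup S < b"
    using Sup_S \<open>c < g b\<close> by (auto simp: S_def order.order_iff_strict)
  moreover have "c < g z" if "Sup S < z" "z \<le> b" for z
    using that cSup_upper[OF _ \<open>bdd_above S\<close>, of z] Sup_S by (force simp: S_def)
  ultimately show ?thesis
    using Sup_S x by (intro that[of "Sup S"]) (auto simp: S_def)
next
  case False
  then show ?thesis
    using assms by (intro that[of 0]) (auto simp: not_le order.order_iff_strict)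
qed

lemma strict_antimono_the_preimage:
  fixes g :: "real \<Rightarrow> real"
  assumes "\<And>a b. P a \<Longrightarrow> P b \<Longrightarrow> a < b \<Longrightarrow> g b < g a" "P s" "g s = y"
  shows "(THE s. P s \<and> g s = y) = s"
proof (rule the_equality)
  fix s' assume "P s' \<and> g s' = y"
  then show "s' = s"
    using assms by (metis linorder_neqE_linordered_idom order_less_irrefl)
qed (use assms in auto)

lemma deriv_neg_within_imp_strict_antimono:
  fixes g g' :: "real \<Rightarrow> real"
  assumes "is_interval S" and deriv: "\<And>s. s \<in> S \<Longrightarrow> (g has_real_derivative g' s) (at s within S)"
    and neg: "\<And>s. s \<in> S \<Longrightarrow> g' s < 0"
  shows "continuous_on S g" "\<And>a b. a \<in> S \<Longrightarrow> b \<in> S \<Longrightarrow> a < b \<Longrightarrow> g b < g a"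
proof -
  show cont: "continuous_on S g"
    unfolding continuous_on_eq_continuous_within by (blast intro: DERIV_continuous[OF deriv])
  fix a b assume ab: "a \<in> S" "b \<in> S" "a < b"
  then have sub: "{a..b} \<subseteq> S"
    using mem_is_interval_1_I[OF \<open>is_interval S\<close> ab(1,2)] by auto
  show "g b < g a"
  proof (rule DERIV_neg_imp_decreasing_open[OF \<open>a < b\<close>])
    fix x assume x: "a < x" "x < b"
    have xS: "{a<..<b} \<subseteq> S" "x \<in> S"
      using sub x by (auto simp: subset_iff)
    then have "(g has_real_derivative g' x) (at x within {a<..<b})"
      using DERIV_subset[OF deriv] by blast
    then have "(g has_real_derivative g' x) (at x)"
      using x at_within_open[of x "{a<..<b}"] by simp
    moreover have "g' x < 0"
      using neg xS(2) by blast
    ultimately show "\<exists>y. (g has_real_derivative y) (at x) \<and> y < 0"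
      by blast
  next
    show "continuous_on {a..b} g"
      using cont sub by (rule continuous_on_subset)
  qed
qed

section \<open>The Jacobi field \<open>f\<close>\<close>

locale jacobi_field =
  fixes \<kappa> f f' :: "real \<Rightarrow> real" and L :: real
  assumes kappa_cont: "continuous_on {0..} \<kappa>"
    and f_deriv: "\<And>x. 0 \<le> x \<Longrightarrow> (f has_real_derivative f' x) (at x within {0..})"
    and f'_deriv: "\<And>x. 0 \<le> x \<Longrightarrow> (f' has_real_derivative - \<kappa> x * f x) (at x within {0..})"
    and f_0: "f 0 = 0" and f'_0: "f' 0 = 1"
    and mu_plus_le_1: "mu_plus \<kappa> L \<le> 1"
begin

lemma at_within_nonneg: "0 < x \<Longrightarrow> at x within {0..} = at (x :: real)"
  by (rule at_within_interior) simp

lemma f_has_deriv_at: "0 < x \<Longrightarrow> (f has_real_derivative f' x) (at x)"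
  using f_deriv[of x] at_within_nonneg[of x] by fastforce

lemma f'_has_deriv_at: "0 < x \<Longrightarrow> (f' has_real_derivative - \<kappa> x * f x) (at x)"
  using f'_deriv[of x] at_within_nonneg[of x] by fastforce

lemma continuous_on_f: "continuous_on {0..} f"
  unfolding continuous_on_eq_continuous_within by (blast intro: DERIV_continuous f_deriv)

lemma continuous_on_f': "continuous_on {0..} f'"
  unfolding continuous_on_eq_continuous_within by (blast intro: DERIV_continuous f'_deriv)

lemma continuous_on_kappa_weight: "continuous_on {0..} (\<lambda>s. s * kappa_plus \<kappa> s)"
  unfolding kappa_plus_def by (intro continuous_intros kappa_cont)

lemma mu_plus_has_deriv:
  assumes "0 < s"
  shows "(mu_plus \<kappa> has_real_derivative s * kappa_plus \<kappa> s) (at s)"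
proof -
  have "continuous_on {0..s + 1} (\<lambda>s. s * kappa_plus \<kappa> s)"
    by (rule continuous_on_subset[OF continuous_on_kappa_weight]) auto
  from integral_has_real_derivative[OF this, of s]
  have "(mu_plus \<kappa> has_real_derivative s * kappa_plus \<kappa> s) (at s within {0..s + 1})"
    using assms unfolding mu_plus_def[abs_def] by auto
  moreover have "at s within {0..s + 1} = at s"
    using assms by (intro at_within_interior) auto
  ultimately show ?thesis
    by simp
qed

lemma continuous_on_mu_plus: "continuous_on {0..x} (mu_plus \<kappa>)"
  unfolding mu_plus_def[abs_def]
  by (rule indefinite_integral_continuous_1[OF integrable_continuous_interval
        [OF continuous_on_subset[OF continuous_on_kappa_weight]]]) auto

lemma mu_plus_mono:
  assumes "0 \<le> x" "x \<le> y"
  shows "mu_plus \<kappa> x \<le> mu_plus \<kappa> y"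
  unfolding mu_plus_def using assms
  by (intro integral_subset_le integrable_continuous_interval
        continuous_on_subset[OF continuous_on_kappa_weight]) (auto simp: kappa_plus_def)

lemma mu_plus_eq_0:
  assumes "\<And>s. 0 < s \<Longrightarrow> s < x \<Longrightarrow> kappa_plus \<kappa> s = 0"
  shows "mu_plus \<kappa> x = 0"
proof -
  have "mu_plus \<kappa> x = integral {0..x} (\<lambda>s. 0)"
    unfolding mu_plus_def by (rule integral_spike[of "{0, x}"]) (use assms in auto)
  then show ?thesis
    by simp
qed

lemma f_strict_mono_before:
  assumes "0 \<le> a" "a < b" "\<And>s. a < s \<Longrightarrow> s < b \<Longrightarrow> 0 < f' s"
  shows "f a < f b"
proof (rule DERIV_pos_imp_increasing_open[OF assms(2)])
  fix x assume "a < x" "x < b"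
  then show "\<exists>y. (f has_real_derivative y) (at x) \<and> 0 < y"
    using f_has_deriv_at[of x] assms(1) assms(3)[of x] by auto
qed (use assms in \<open>auto intro: continuous_on_subset[OF continuous_on_f]\<close>)

text \<open>Sturm comparison: with \<open>c = f(x)\<close>, \<open>sturm c\<close> vanishes at \<open>0\<close> and is nondecreasing on
  \<open>[0, x]\<close> while \<open>f\<close> increases there, whence \<open>x f'(x) \<ge> f(x) (1 - \<mu>\<^sub>+(x))\<close>.\<close>
definition sturm :: "real \<Rightarrow> real \<Rightarrow> real" where
  "sturm c s = s * f' s - f s + c * mu_plus \<kappa> s"

lemma sturm_has_deriv:
  assumes "0 < s"
  shows "(sturm c has_real_derivative s * (c * kappa_plus \<kappa> s - \<kappa> s * f s)) (at s)"
proof -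
  have "((\<lambda>s. s * f' s) has_real_derivative 1 * f' s + (- \<kappa> s * f s) * s) (at s)"
    by (rule DERIV_mult[OF DERIV_ident f'_has_deriv_at[OF assms]])
  moreover have "((\<lambda>s. c * mu_plus \<kappa> s) has_real_derivative c * (s * kappa_plus \<kappa> s)) (at s)"
    using assms by (intro DERIV_cmult mu_plus_has_deriv)
  ultimately have "(sturm c has_real_derivative
      (1 * f' s + (- \<kappa> s * f s) * s) - f' s + c * (s * kappa_plus \<kappa> s)) (at s)"
    unfolding sturm_def[abs_def] using assms by (intro DERIV_add DERIV_diff f_has_deriv_at)
  then show ?thesis
    by (simp add: algebra_simps)
qed

lemma sturm_deriv_lower_bound:
  assumes "0 < s" "0 \<le> f s"
  shows "s * kappa_plus \<kappa> s * (c - f s) \<le> s * (c * kappa_plus \<kappa> s - \<kappa> s * f s)"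
proof -
  have "\<kappa> s * f s \<le> kappa_plus \<kappa> s * f s"
    using assms(2) by (intro mult_right_mono) (auto simp: kappa_plus_def)
  then show ?thesis
    using assms(1) by (simp add: algebra_simps)
qed

lemma sturm_mono:
  assumes f_bounds: "\<And>s. 0 < s \<Longrightarrow> s < x \<Longrightarrow> 0 \<le> f s \<and> f s \<le> c"
  shows "mono_on {0..x} (sturm c)"
proof (rule mono_onI)
  fix a b assume ab: "a \<in> {0..x}" "b \<in> {0..x}" "a \<le> b"
  show "sturm c a \<le> sturm c b"
  proof (rule DERIV_nonneg_imp_increasing_open[OF ab(3)])
    fix y assume "a < y" "y < b"
    then have "0 < y" "y < x"
      using ab by auto
    moreover have "0 \<le> y * kappa_plus \<kappa> y * (c - f y)"
      using f_bounds[OF \<open>0 < y\<close> \<open>y < x\<close>] \<open>0 < y\<close> by (simp add: kappa_plus_def)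
    ultimately show "\<exists>D. (sturm c has_real_derivative D) (at y) \<and> 0 \<le> D"
      using sturm_has_deriv sturm_deriv_lower_bound[of y c] f_bounds order_trans by blast
  next
    have "continuous_on {0..x} (sturm c)"
      unfolding sturm_def[abs_def]
      by (intro continuous_intros continuous_on_mu_plus continuous_on_subset[OF continuous_on_f]
          continuous_on_subset[OF continuous_on_f']) auto
    then show "continuous_on {a..b} (sturm c)"
      by (rule continuous_on_subset) (use ab in auto)
  qed
qed

lemma f'_pos_if_pos_before:
  assumes x: "0 < x" "x \<le> L" and pos: "\<And>s. 0 \<le> s \<Longrightarrow> s < x \<Longrightarrow> 0 < f' s"
  shows "0 < f' x"
proof -
  have f_mono: "f a < f b" if "0 \<le> a" "a < b" "b \<le> x" for a b
    using f_strict_mono_before[of a b] pos that by auto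
  then have f_bounds: "0 \<le> f s \<and> f s \<le> f x" if "0 < s" "s < x" for s
    using f_0 that by (metis less_imp_le order.refl)
  have "0 < f x"
    using f_mono[of 0 x] x f_0 by simp
  have mono: "mono_on {0..x} (sturm (f x))"
    by (rule sturm_mono) (rule f_bounds)
  have "0 < x * f' x"
  proof (cases "\<exists>s. 0 < s \<and> s < x \<and> 0 < kappa_plus \<kappa> s")
    case True
    then obtain s where s: "0 < s" "s < x" "0 < kappa_plus \<kappa> s"
      by blast
    have "0 < s * kappa_plus \<kappa> s * (f x - f s)"
      using f_mono[of s x] s by simp
    then have "0 < s * (f x * kappa_plus \<kappa> s - \<kappa> s * f s)"
      using sturm_deriv_lower_bound[of s "f x"] f_bounds[OF s(1,2)] s(1) by linarith
    then have "sturm (f x) 0 < sturm (f x) x"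
      by (rule mono_on_strict_if_deriv_pos[OF mono s(1,2) sturm_has_deriv[OF s(1)]])
    moreover have "0 \<le> f x * (1 - mu_plus \<kappa> x)"
      using mu_plus_mono[of x L] x mu_plus_le_1 \<open>0 < f x\<close> by simp
    ultimately show ?thesis
      by (simp add: sturm_def f_0 mu_plus_def algebra_simps)
  next
    case False
    then have "mu_plus \<kappa> x = 0"
      by (intro mu_plus_eq_0) (auto simp: kappa_plus_def)
    moreover have "sturm (f x) 0 \<le> sturm (f x) x"
      using mono x by (auto intro: mono_onD)
    ultimately show ?thesis
      using \<open>0 < f x\<close> by (simp add: sturm_def f_0 mu_plus_def)
  qed
  then show ?thesis
    using x by (simp add: zero_less_mult_iff)
qed

lemma f'_pos: "0 \<le> x \<Longrightarrow> x \<le> L \<Longrightarrow> 0 < f' x"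
  by (rule pos_by_continuous_induction[of 0 L])
    (use f'_pos_if_pos_before f'_0 in \<open>auto intro: continuous_on_subset[OF continuous_on_f']\<close>)

lemma f_strict_mono: "0 \<le> a \<Longrightarrow> a < b \<Longrightarrow> b \<le> L \<Longrightarrow> f a < f b"
  by (rule f_strict_mono_before) (auto intro: f'_pos)

lemma f_pos: "0 < x \<Longrightarrow> x \<le> L \<Longrightarrow> 0 < f x"
  using f_strict_mono[of 0 x] f_0 by simp

lemma f_over_id_tendsto: "((\<lambda>x. f x / x) \<longlongrightarrow> 1) (at_right 0)"
proof -
  have "((\<lambda>y. (f y - f 0) / (y - 0)) \<longlongrightarrow> f' 0) (at 0 within {0..})"
    using f_deriv[of 0] by (simp add: has_field_derivative_iff)
  then have "((\<lambda>y. (f y - f 0) / (y - 0)) \<longlongrightarrow> f' 0) (at_right 0)"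
    by (rule tendsto_mono[rotated]) (rule at_le, auto)
  then show ?thesis
    using f_0 f'_0 by simp
qed

lemma b0_le: "0 \<le> s \<Longrightarrow> s \<le> x \<Longrightarrow> b0 f' x \<le> f' s"
  unfolding b0_def
  by (rule cInf_lower) (auto intro!: bounded_imp_bdd_below compact_imp_bounded
      compact_continuous_image continuous_on_subset[OF continuous_on_f'])

lemma le_b1: "0 \<le> s \<Longrightarrow> s \<le> x \<Longrightarrow> f' s \<le> b1 f' x"
  unfolding b1_def
  by (rule cSup_upper) (auto intro!: bounded_imp_bdd_above compact_imp_bounded
      compact_continuous_image continuous_on_subset[OF continuous_on_f'])

lemma b0_pos:
  assumes "0 \<le> x" "x \<le> L"
  shows "0 < b0 f' x"
proof -
  obtain s where s: "s \<in> {0..x}" "\<And>y. y \<in> {0..x} \<Longrightarrow> f' s \<le> f' y"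
    using continuous_attains_inf[of "{0..x}" f'] continuous_on_subset[OF continuous_on_f'] assms
    by auto
  have "b0 f' x = f' s"
    unfolding b0_def by (rule cInf_eq_minimum) (use s in auto)
  then show ?thesis
    using f'_pos[of s] s assms by auto
qed

lemma b0_le_1: "0 \<le> x \<Longrightarrow> b0 f' x \<le> 1"
  using b0_le[of 0 x] f'_0 by simp

lemma one_le_b1: "0 \<le> x \<Longrightarrow> 1 \<le> b1 f' x"
  using le_b1[of 0 x] f'_0 by simp

end

section \<open>The potential \<open>\<phi>\<close> and the functions \<open>q\<^sub>0\<close>, \<open>q\<^sub>1\<close>\<close>

locale convex_potential =
  fixes \<phi> \<phi>' \<phi>'' q1' q0' :: "real \<Rightarrow> real" and t0 :: real
  assumes phi_deriv: "\<And>v. 0 < v \<Longrightarrow> (\<phi> has_real_derivative \<phi>' v) (at v)"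
    and phi'_deriv: "\<And>v. 0 < v \<Longrightarrow> (\<phi>' has_real_derivative \<phi>'' v) (at v)"
    and phi_convex: "convex_on {0<..} \<phi>"
    and phi'_growth: "mono_on {0<..} (\<lambda>v. v * \<phi>' v)"
    and t0_nonneg: "0 \<le> t0"
    and phi'_t0: "(0 < t0 \<and> \<phi>' t0 = 0) \<or> (t0 = 0 \<and> (\<phi>' \<longlongrightarrow> 0) (at_right 0))"
    and q1_deriv: "\<And>s. 1 \<le> s \<Longrightarrow> (q1 \<phi>' t0 has_real_derivative q1' s) (at s within {1..})"
    and q1'_neg: "\<And>s. 1 \<le> s \<Longrightarrow> q1' s < 0"
    and q0_deriv: "\<And>s. 0 < s \<Longrightarrow> s \<le> 1 \<Longrightarrow> (q0 \<phi>' t0 has_real_derivative q0' s) (at s within {0<..1})"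
    and q0'_neg: "\<And>s. 0 < s \<Longrightarrow> s \<le> 1 \<Longrightarrow> q0' s < 0"
    and q1_tendsto: "(q1 \<phi>' t0 \<longlongrightarrow> 0) at_top"
    and q0_tendsto: "filterlim (q0 \<phi>' t0) at_top (at_right 0)"
begin

lemma phi'_mono: "0 < x \<Longrightarrow> x \<le> y \<Longrightarrow> \<phi>' x \<le> \<phi>' y"
  by (rule convex_on_deriv_mono[OF phi_convex]) (auto intro: phi_deriv)

lemma phi''_nonneg: "0 < v \<Longrightarrow> 0 \<le> \<phi>'' v"
  by (rule mono_on_imp_deriv_nonneg[of "{0<..}" \<phi>']) (auto simp: interior_open intro: mono_onI phi'_mono phi'_deriv)

lemma phi'_nonneg:
  assumes "t0 < v"
  shows "0 \<le> \<phi>' v"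
  using phi'_t0
proof
  assume "0 < t0 \<and> \<phi>' t0 = 0"
  then show ?thesis
    using phi'_mono[of t0 v] assms by auto
next
  assume t0: "t0 = 0 \<and> (\<phi>' \<longlongrightarrow> 0) (at_right 0)"
  have "eventually (\<lambda>x. \<phi>' x \<le> \<phi>' v) (at_right 0)"
    using eventually_at_right_real[of 0 v] assms t0
    by (auto elim!: eventually_mono intro: phi'_mono)
  then show ?thesis
    using t0 tendsto_upperbound[of \<phi>' 0 "at_right 0" "\<phi>' v"] by auto
qed

lemma phi'_nonpos: "0 < v \<Longrightarrow> v \<le> t0 \<Longrightarrow> \<phi>' v \<le> 0"
  using phi'_t0 phi'_mono[of v t0] by auto

lemma q1_strict_antimono: "1 \<le> a \<Longrightarrow> a < b \<Longrightarrow> q1 \<phi>' t0 b < q1 \<phi>' t0 a"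
  using deriv_neg_within_imp_strict_antimono(2)[of "{1..}" "q1 \<phi>' t0" q1'] q1_deriv q1'_neg
  by (simp add: is_interval_ci)

lemma continuous_on_q1: "continuous_on {1..} (q1 \<phi>' t0)"
  using deriv_neg_within_imp_strict_antimono(1)[of "{1..}" "q1 \<phi>' t0" q1'] q1_deriv q1'_neg
  by (simp add: is_interval_ci)

lemma q0_strict_antimono: "0 < a \<Longrightarrow> a < b \<Longrightarrow> b \<le> 1 \<Longrightarrow> q0 \<phi>' t0 b < q0 \<phi>' t0 a"
  using deriv_neg_within_imp_strict_antimono(2)[of "{0<..1}" "q0 \<phi>' t0" q0'] q0_deriv q0'_neg
  by (simp add: is_interval_ic)

lemma continuous_on_q0: "continuous_on {0<..1} (q0 \<phi>' t0)"
  using deriv_neg_within_imp_strict_antimono(1)[of "{0<..1}" "q0 \<phi>' t0" q0'] q0_deriv q0'_neg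
  by (simp add: is_interval_ic)

lemma ratio_le_q1:
  assumes s: "1 \<le> s" and v: "t0 < v"
  shows "\<phi>' v / \<phi>' (s * v) \<le> q1 \<phi>' t0 s"
proof -
  have bound: "\<phi>' w / \<phi>' (s * w) \<le> 1" if "t0 < w" for w
  proof -
    have "0 < w"
      using that t0_nonneg by linarith
    then have "\<phi>' w \<le> \<phi>' (s * w)"
      using phi'_mono[of w "s * w"] s by (simp add: mult_le_cancel_right1)
    moreover have "0 \<le> \<phi>' w"
      using phi'_nonneg[OF that] .
    ultimately show ?thesis
      by (cases "\<phi>' (s * w) = 0") auto
  qed
  show ?thesis
    unfolding q1_def by (rule cSUP_upper) (use v bound in \<open>auto intro!: bdd_aboveI[of _ 1]\<close>)
qed

lemma one_le_q1_1: "1 \<le> q1 \<phi>' t0 1"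
proof -
  have "\<exists>v>t0. 0 < \<phi>' v"
  proof (rule ccontr)
    assume "\<not> ?thesis"
    then have "\<phi>' v = 0" if "t0 < v" for v
      using phi'_nonneg[OF that] that by force
    then have "(\<lambda>v. \<phi>' v / \<phi>' (s * v)) ` {t0<..} = (\<lambda>v. 0) ` {t0<..}" for s
      by (intro image_cong) auto
    then have "q1 \<phi>' t0 s = 0" for s
      unfolding q1_def by (subst (asm) image_constant_conv) auto
    then show False
      using q1_strict_antimono[of 1 2] by simp
  qed
  then obtain v where "t0 < v" "0 < \<phi>' v"
    by blast
  then show ?thesis
    using ratio_le_q1[of 1 v] by simp
qed

lemma q1_inv:
  assumes "0 < y" "y \<le> 1"
  shows "1 \<le> q1_inv \<phi>' t0 y" "q1 \<phi>' t0 (q1_inv \<phi>' t0 y) = y"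
proof -
  obtain N where N: "\<And>x. N \<le> x \<Longrightarrow> q1 \<phi>' t0 x < y"
    using order_tendstoD(2)[OF q1_tendsto assms(1)] unfolding eventually_at_top_linorder by blast
  define b where "b = max N 1"
  have "q1 \<phi>' t0 b \<le> y" "y \<le> q1 \<phi>' t0 1" "1 \<le> b"
    using N[of b] one_le_q1_1 assms by (auto simp: b_def)
  moreover have "continuous_on {1..b} (q1 \<phi>' t0)"
    by (rule continuous_on_subset[OF continuous_on_q1]) auto
  ultimately obtain s where s: "1 \<le> s" "q1 \<phi>' t0 s = y"
    using IVT2'[of "q1 \<phi>' t0" b y 1] by auto
  have "q1_inv \<phi>' t0 y = s"
    unfolding q1_inv_def by (rule strict_antimono_the_preimage) (use q1_strict_antimono s in auto)
  then show "1 \<le> q1_inv \<phi>' t0 y" "q1 \<phi>' t0 (q1_inv \<phi>' t0 y) = y"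
    using s by simp_all
qed

lemma q0_le_ratio:
  assumes s: "0 < s" "s \<le> 1" and v: "t0 / s < v"
  shows "q0 \<phi>' t0 s \<le> \<phi>' v / \<phi>' (s * v)"
proof -
  have bound: "0 \<le> \<phi>' w / \<phi>' (s * w)" if "t0 / s < w" for w
  proof -
    have "t0 < s * w"
      using that s by (simp add: pos_divide_less_eq mult.commute)
    moreover have "0 < w"
      using that s t0_nonneg divide_nonneg_pos[of t0 s] by linarith
    ultimately have "0 \<le> \<phi>' (s * w)" "\<phi>' (s * w) \<le> \<phi>' w"
      using phi'_nonneg phi'_mono[of "s * w" w] s t0_nonneg
      by (auto simp: mult_le_cancel_right1)
    then show ?thesis
      by simp
  qed
  show ?thesis
    unfolding q0_def by (rule cINF_lower) (use v bound in \<open>auto intro!: bdd_belowI[of _ 0]\<close>)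
qed

lemma q0_1_le_1: "q0 \<phi>' t0 1 \<le> 1"
  using q0_le_ratio[of 1 "t0 + 1"] by (cases "\<phi>' (t0 + 1) = 0") auto

lemma q0_inv:
  assumes "1 \<le> y"
  shows "0 < q0_inv \<phi>' t0 y" "q0_inv \<phi>' t0 y \<le> 1" "q0 \<phi>' t0 (q0_inv \<phi>' t0 y) = y"
proof -
  have "eventually (\<lambda>x. y < q0 \<phi>' t0 x) (at_right 0)"
    using q0_tendsto unfolding filterlim_at_top_dense by blast
  then obtain d where "0 < d" and d: "\<And>x. 0 < x \<Longrightarrow> x < d \<Longrightarrow> y < q0 \<phi>' t0 x"
    unfolding eventually_at_right_field by auto
  define a where "a = min (d / 2) (1 / 2)"
  have "0 < a" "a < d"
    using \<open>0 < d\<close> by (auto simp: a_def)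
  then have a: "0 < a" "a \<le> 1" "y \<le> q0 \<phi>' t0 a"
    using d[of a] by (auto simp: a_def)
  moreover have "q0 \<phi>' t0 1 \<le> y"
    using q0_1_le_1 assms by simp
  moreover have "continuous_on {a..1} (q0 \<phi>' t0)"
    by (rule continuous_on_subset[OF continuous_on_q0]) (use a in auto)
  ultimately obtain s where s: "a \<le> s" "s \<le> 1" "q0 \<phi>' t0 s = y"
    using IVT2'[of "q0 \<phi>' t0" 1 y a] by auto
  have "q0_inv \<phi>' t0 y = s"
    unfolding q0_inv_def
    using strict_antimono_the_preimage[of "\<lambda>s. 0 < s \<and> s \<le> 1" "q0 \<phi>' t0" s y]
      q0_strict_antimono s a by (simp add: conj_assoc)
  then show "0 < q0_inv \<phi>' t0 y" "q0_inv \<phi>' t0 y \<le> 1" "q0 \<phi>' t0 (q0_inv \<phi>' t0 y) = y"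
    using s a by simp_all
qed

lemma phi'_lt_q1_mult:
  assumes "t0 < t" "1 \<le> a" "a < g" "0 < \<phi>' (g * t)"
  shows "\<phi>' t < q1 \<phi>' t0 a * \<phi>' (g * t)"
proof -
  have "\<phi>' t / \<phi>' (g * t) \<le> q1 \<phi>' t0 g"
    using ratio_le_q1[of g t] assms by simp
  then have "\<phi>' t \<le> q1 \<phi>' t0 g * \<phi>' (g * t)"
    using assms(4) by (simp add: divide_le_eq)
  also have "\<dots> < q1 \<phi>' t0 a * \<phi>' (g * t)"
    using q1_strict_antimono[of a g] assms by simp
  finally show ?thesis .
qed

lemma q0_mult_lt_phi':
  assumes "t0 < g * t" "0 < g" "g < a" "a \<le> 1" "0 < \<phi>' (g * t)"
  shows "q0 \<phi>' t0 a * \<phi>' (g * t) < \<phi>' t"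
proof -
  have "q0 \<phi>' t0 g \<le> \<phi>' t / \<phi>' (g * t)"
    using q0_le_ratio[of g t] assms by (simp add: pos_divide_less_eq mult.commute)
  then have "q0 \<phi>' t0 g * \<phi>' (g * t) \<le> \<phi>' t"
    using assms(5) by (simp add: le_divide_eq)
  moreover have "q0 \<phi>' t0 a * \<phi>' (g * t) < q0 \<phi>' t0 g * \<phi>' (g * t)"
    using q0_strict_antimono[of g a] assms by simp
  ultimately show ?thesis
    by linarith
qed

lemma phi'_combination_nonpos_above_t0:
  assumes "t0 < t" "t < g * t" "1 \<le> a" "a < g" "q1 \<phi>' t0 a = B0 / C1"
    and "B0 \<le> Q" "0 \<le> P" "P \<le> C1" "0 < C1"
  shows "P * \<phi>' t - Q * \<phi>' (g * t) \<le> 0 \<and> (P * \<phi>' t - Q * \<phi>' (g * t) = 0 \<longrightarrow> \<phi>' (g * t) = 0)"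
proof (cases "0 < \<phi>' (g * t)")
  case True
  have "0 \<le> \<phi>' t"
    using phi'_nonneg[OF assms(1)] .
  then have "P * \<phi>' t \<le> C1 * \<phi>' t"
    by (rule mult_right_mono[OF assms(8)])
  also have "\<dots> < C1 * (q1 \<phi>' t0 a * \<phi>' (g * t))"
    using phi'_lt_q1_mult[OF assms(1,3,4) True] assms(9) by simp
  also have "\<dots> \<le> Q * \<phi>' (g * t)"
    using assms(5,6,9) True by (simp add: mult_right_mono)
  finally show ?thesis
    by simp
next
  case False
  have "0 < t"
    using assms(1) t0_nonneg by simp
  then have "\<phi>' t = 0" "\<phi>' (g * t) = 0"
    using False phi'_nonneg[OF assms(1)] phi'_mono[of t "g * t"] assms(2) by linarith+
  then show ?thesis
    by simp
qed

lemma phi'_combination_nonneg_above_t0: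
  assumes "t0 < g * t" "0 < g" "g < a" "a \<le> 1" "q0 \<phi>' t0 a = B1 / C0"
    and "Q \<le> B1" "C0 \<le> P" "0 < C0"
  shows "0 \<le> P * \<phi>' t - Q * \<phi>' (g * t) \<and> (P * \<phi>' t - Q * \<phi>' (g * t) = 0 \<longrightarrow> \<phi>' (g * t) = 0)"
proof -
  have "0 < g * t"
    using assms(1) t0_nonneg by simp
  then have "g * t < t"
    using assms(2-4) by (simp add: zero_less_mult_iff)
  then have "0 \<le> \<phi>' (g * t)" "\<phi>' (g * t) \<le> \<phi>' t"
    using phi'_nonneg[OF assms(1)] phi'_mono[OF \<open>0 < g * t\<close>] by auto
  show ?thesis
  proof (cases "0 < \<phi>' (g * t)")
    case True
    have "Q * \<phi>' (g * t) \<le> C0 * (q0 \<phi>' t0 a * \<phi>' (g * t))"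
      using assms(5,6,8) True by (simp add: mult_right_mono)
    also have "\<dots> < C0 * \<phi>' t"
      using q0_mult_lt_phi'[OF assms(1-4) True] assms(8) by simp
    also have "\<dots> \<le> P * \<phi>' t"
      using assms(7) \<open>\<phi>' (g * t) \<le> \<phi>' t\<close> True by (intro mult_right_mono) auto
    finally show ?thesis
      by simp
  next
    case False
    then show ?thesis
      using \<open>0 \<le> \<phi>' (g * t)\<close> \<open>\<phi>' (g * t) \<le> \<phi>' t\<close> assms(7,8) by simp
  qed
qed

lemma phi'_combination_nonpos_below_t0:
  assumes "0 < t" "t \<le> t0" "1 < g" "0 < P" "0 < Q" "Q < P * g"
  shows "P * \<phi>' t - Q * \<phi>' (g * t) \<le> 0 \<and> (P * \<phi>' t - Q * \<phi>' (g * t) = 0 \<longrightarrow> \<phi>' (g * t) = 0)"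
proof (cases "t0 < g * t")
  case True
  have "P * \<phi>' t \<le> 0" "0 \<le> Q * \<phi>' (g * t)"
    using phi'_nonneg[OF True] phi'_nonpos[OF assms(1,2)] assms(4,5) by (simp_all add: mult_nonneg_nonpos)
  then show ?thesis
    using assms(5) by auto
next
  case False
  have "t < g * t"
    using assms(1,3) by simp
  then have "\<phi>' (g * t) \<le> 0"
    using False phi'_nonpos assms(1) by simp
  have "t * \<phi>' t \<le> (g * t) * \<phi>' (g * t)"
    using mono_onD[OF phi'_growth, of t "g * t"] assms(1) \<open>t < g * t\<close> by simp
  then have "\<phi>' t \<le> g * \<phi>' (g * t)"
    using assms(1) by (simp add: mult.commute mult.left_commute)
  then have "P * \<phi>' t \<le> P * (g * \<phi>' (g * t))"
    using assms(4) by (simp add: mult_left_mono)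
  then have R: "P * \<phi>' t - Q * \<phi>' (g * t) \<le> (P * g - Q) * \<phi>' (g * t)"
    by (simp add: algebra_simps)
  have "(P * g - Q) * \<phi>' (g * t) \<le> 0" "0 \<le> (P * g - Q) * \<phi>' (g * t) \<Longrightarrow> \<phi>' (g * t) = 0"
    using assms(6) \<open>\<phi>' (g * t) \<le> 0\<close> by (simp_all add: mult_nonneg_nonpos zero_le_mult_iff)
  then show ?thesis
    using R by auto
qed

lemma phi'_combination_nonneg_below_t0:
  assumes "0 < t" "0 < g" "g * t \<le> t0" "g < 1" "0 < P" "0 < Q" "P * g < Q"
  shows "0 \<le> P * \<phi>' t - Q * \<phi>' (g * t) \<and> (P * \<phi>' t - Q * \<phi>' (g * t) = 0 \<longrightarrow> \<phi>' (g * t) = 0)"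
proof -
  have "0 < g * t" "g * t < t"
    using assms(1,2,4) by simp_all
  then have "\<phi>' (g * t) \<le> 0"
    using phi'_nonpos assms(3) by simp
  show ?thesis
  proof (cases "t0 < t")
    case True
    have "0 \<le> P * \<phi>' t" "Q * \<phi>' (g * t) \<le> 0"
      using phi'_nonneg[OF True] \<open>\<phi>' (g * t) \<le> 0\<close> assms(5,6) by (simp_all add: mult_nonneg_nonpos)
    then show ?thesis
      using assms(6) by auto
  next
    case False
    have "(g * t) * \<phi>' (g * t) \<le> t * \<phi>' t"
      using mono_onD[OF phi'_growth, of "g * t" t] \<open>0 < g * t\<close> \<open>g * t < t\<close> by fastforce
    then have "t * (g * \<phi>' (g * t)) \<le> t * \<phi>' t"
      by (simp add: mult_ac)
    then have "g * \<phi>' (g * t) \<le> \<phi>' t"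
      using assms(1) by simp
    then have "P * (g * \<phi>' (g * t)) \<le> P * \<phi>' t"
      using assms(5) by (simp add: mult_left_mono)
    then have R: "(P * g - Q) * \<phi>' (g * t) \<le> P * \<phi>' t - Q * \<phi>' (g * t)"
      by (simp add: algebra_simps)
    have "0 \<le> (P * g - Q) * \<phi>' (g * t)" "(P * g - Q) * \<phi>' (g * t) \<le> 0 \<Longrightarrow> \<phi>' (g * t) = 0"
      using assms(7) \<open>\<phi>' (g * t) \<le> 0\<close> by (simp_all add: mult_nonpos_nonpos mult_le_0_iff)
    then show ?thesis
      using R by auto
  qed
qed

text \<open>The scalar inequalities behind the two bounds: \<open>P\<close> and \<open>Q\<close> stand for \<open>f'(r)\<close> and
  \<open>f'(\<rho>)\<close>, bounded by \<open>b\<^sub>0, b\<^sub>1\<close> at \<open>r(\<rho>)\<close> and at \<open>\<rho>\<close>, and \<open>g t\<close> for \<open>r' = g \<tau>\<close>.\<close>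
lemma phi'_combination_nonpos:
  assumes t: "0 < t"
    and Q: "0 < B0" "B0 \<le> Q" "Q \<le> B1" and P: "0 < C0" "C0 \<le> P" "P \<le> C1" and "B0 \<le> C1"
    and g: "B1 < C0 * g" "q1_inv \<phi>' t0 (B0 / C1) < g"
  shows "P * \<phi>' t - Q * \<phi>' (g * t) \<le> 0 \<and> (P * \<phi>' t - Q * \<phi>' (g * t) = 0 \<longrightarrow> \<phi>' (g * t) = 0)"
proof -
  define a where "a = q1_inv \<phi>' t0 (B0 / C1)"
  have a: "1 \<le> a" "q1 \<phi>' t0 a = B0 / C1" "a < g"
    using q1_inv[of "B0 / C1"] Q P \<open>B0 \<le> C1\<close> g(2) by (simp_all add: a_def)
  show ?thesis
  proof (cases "t0 < t")
    case True
    show ?thesis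
      by (rule phi'_combination_nonpos_above_t0[OF True _ a(1) a(3) a(2)]) (use a t Q P in auto)
  next
    case False
    have "C0 * g \<le> P * g"
      using P(2) a by (intro mult_right_mono) auto
    then have "Q < P * g"
      using Q(3) g(1) by linarith
    then show ?thesis
      using phi'_combination_nonpos_below_t0[of t g P Q] False t a Q P by simp
  qed
qed

lemma phi'_combination_nonneg:
  assumes t: "0 < t" and "0 < g"
    and Q: "0 < B0" "B0 \<le> Q" "Q \<le> B1" and P: "0 < C0" "C0 \<le> P" "P \<le> C1" and "C0 \<le> B1"
    and g: "C1 * g < B0" "g < q0_inv \<phi>' t0 (B1 / C0)"
  shows "0 \<le> P * \<phi>' t - Q * \<phi>' (g * t) \<and> (P * \<phi>' t - Q * \<phi>' (g * t) = 0 \<longrightarrow> \<phi>' (g * t) = 0)"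
proof -
  define a where "a = q0_inv \<phi>' t0 (B1 / C0)"
  have a: "0 < a" "a \<le> 1" "q0 \<phi>' t0 a = B1 / C0" "g < a"
    using q0_inv[of "B1 / C0"] P \<open>C0 \<le> B1\<close> g(2) by (simp_all add: a_def)
  show ?thesis
  proof (cases "t0 < g * t")
    case True
    show ?thesis
      by (rule phi'_combination_nonneg_above_t0[OF True \<open>0 < g\<close> a(4) a(2) a(3)]) (use Q P in auto)
  next
    case False
    have "P * g \<le> C1 * g"
      using P(3) \<open>0 < g\<close> by (intro mult_right_mono) auto
    then have "P * g < Q"
      using Q(2) g(1) by linarith
    then show ?thesis
      using phi'_combination_nonneg_below_t0[of t g P Q] False t \<open>0 < g\<close> a Q P by simp
  qed
qed

end

section \<open>Equilibrium solutions\<close>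

text \<open>With \<open>t = \<tau>\<close> and \<open>p = \<tau>\<^sup>n\<^sup>-\<^sup>2\<close> this turns the equilibrium equation into a formula for
  \<open>f \<tau>\<^sup>n\<^sup>-\<^sup>1 N'\<close>.\<close>
lemma equilibrium_ode_rearranged:
  fixes F t p a b r1 r2 m R T' c :: real
  assumes "t \<noteq> 0" "p \<noteq> 0"
    and ode: "F * (a + b * (t * p) ^ 2) * r2 = m * R - m * (F * T') * b * r1 * (t * p ^ 2)"
  shows "F * (t * p) * (b * (r2 * (t * p) + r1 * (m * p * T')) + (a * r2 * (t * p) - c * (m * p * T')) / (t * p) ^ 2)
    = m * (R - F * c * T' / t)"
proof -
  have "F * (t * p) * (b * (r2 * (t * p) + r1 * (m * p * T')) + (a * r2 * (t * p) - c * (m * p * T')) / (t * p) ^ 2)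
      = F * (a + b * (t * p) ^ 2) * r2 + m * (F * T') * b * r1 * (t * p ^ 2) - m * F * c * T' / t"
    using assms(1,2) by (simp add: field_simps power2_eq_square)
  also have "\<dots> = m * (R - F * c * T' / t)"
    using ode by (simp add: algebra_simps)
  finally show ?thesis .
qed

locale equilibrium =
  jacobi_field \<kappa> f f' "max lam 1" + convex_potential \<phi> \<phi>' \<phi>'' q1' q0' t0
  for \<kappa> f f' :: "real \<Rightarrow> real" and lam :: real
    and \<phi> \<phi>' \<phi>'' q1' q0' :: "real \<Rightarrow> real" and t0 :: real +
  fixes n :: nat and h h' h'' r r' r'' :: "real \<Rightarrow> real"
  assumes n2: "2 \<le> n"
    and h_deriv: "\<And>v. 0 < v \<Longrightarrow> (h has_real_derivative h' v) (at v)"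
    and h'_deriv: "\<And>v. 0 < v \<Longrightarrow> (h' has_real_derivative h'' v) (at v)"
    and h_strict: "strictly_convex_on {0<..} h"
    and r_deriv: "\<And>\<rho>. 0 < \<rho> \<Longrightarrow> \<rho> \<le> 1 \<Longrightarrow> (r has_real_derivative r' \<rho>) (at \<rho> within {0<..1})"
    and r'_cont: "continuous_on {0<..1} r'"
    and r'_deriv: "\<And>\<rho>. 0 < \<rho> \<Longrightarrow> \<rho> < 1 \<Longrightarrow> (r' has_real_derivative r'' \<rho>) (at \<rho>)"
    and r'_pos: "\<And>\<rho>. 0 < \<rho> \<Longrightarrow> \<rho> \<le> 1 \<Longrightarrow> 0 < r' \<rho>"
    and r_tendsto_0: "(r \<longlongrightarrow> 0) (at_right 0)"
    and r_1: "r 1 = lam"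
    and equilibrium_ode: "\<And>\<rho>. 0 < \<rho> \<Longrightarrow> \<rho> < 1 \<Longrightarrow>
       f \<rho> * (\<phi>'' (r' \<rho>) + h'' (r' \<rho> * tau f r \<rho> ^ (n - 1)) * tau f r \<rho> ^ (2 * (n - 1))) * r'' \<rho>
       = real (n - 1) * (f' (r \<rho>) * \<phi>' (tau f r \<rho>) - f' \<rho> * \<phi>' (r' \<rho>))
         - real (n - 1) * (f' (r \<rho>) * r' \<rho> - f' \<rho> * tau f r \<rho>)
             * h'' (r' \<rho> * tau f r \<rho> ^ (n - 1)) * r' \<rho> * tau f r \<rho> ^ (2 * n - 3)"
begin

abbreviation "\<tau> \<equiv> tau f r"

abbreviation "m \<equiv> n - 1"

lemma h'_strict_mono: "0 < x \<Longrightarrow> x < y \<Longrightarrow> h' x < h' y"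
  by (rule strictly_convex_on_deriv_strict_mono[OF h_strict]) (auto intro: h_deriv)

lemma h''_nonneg: "0 < v \<Longrightarrow> 0 \<le> h'' v"
  by (rule mono_on_imp_deriv_nonneg[of "{0<..}" h'])
    (auto simp: interior_open intro!: mono_onI h'_deriv dest: h'_strict_mono order.order_iff_strict[THEN iffD1])

lemma r_has_deriv_at:
  assumes "0 < x" "x < 1"
  shows "(r has_real_derivative r' x) (at x)"
proof -
  have "(r has_real_derivative r' x) (at x within {0<..<1})"
    by (rule DERIV_subset[OF r_deriv]) (use assms in auto)
  moreover have "at x within {0<..<1} = at x"
    using assms by (intro at_within_open) auto
  ultimately show ?thesis
    by simp
qed

lemma continuous_on_r: "continuous_on {0<..1} r"
  unfolding continuous_on_eq_continuous_within
  by (auto intro: DERIV_continuous[OF r_deriv])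

lemma r_strict_mono:
  assumes "0 < a" "a < b" "b \<le> 1"
  shows "r a < r b"
proof (rule DERIV_pos_imp_increasing_open[OF assms(2)])
  fix x assume "a < x" "x < b"
  then show "\<exists>y. (r has_real_derivative y) (at x) \<and> 0 < y"
    using r_has_deriv_at[of x] r'_pos[of x] assms by auto
qed (use assms in \<open>auto intro: continuous_on_subset[OF continuous_on_r]\<close>)

lemma r_pos:
  assumes "0 < x" "x \<le> 1"
  shows "0 < r x"
proof -
  have "0 < x / 2"
    using assms by simp
  have "eventually (\<lambda>y. r y \<le> r (x / 2)) (at_right 0)"
    using eventually_at_right_real[OF \<open>0 < x / 2\<close>]
  proof (rule eventually_mono)
    fix y assume "y \<in> {0<..<x / 2}"
    then show "r y \<le> r (x / 2)"
      using r_strict_mono[of y "x / 2"] assms by auto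
  qed
  then have "0 \<le> r (x / 2)"
    using r_tendsto_0 tendsto_upperbound[of r 0 "at_right 0" "r (x / 2)"] by auto
  then show ?thesis
    using r_strict_mono[of "x / 2" x] assms by auto
qed

lemma r_le: "0 < x \<Longrightarrow> x \<le> 1 \<Longrightarrow> r x \<le> max lam 1"
  using r_strict_mono[of x 1] r_1 by (cases "x = 1") auto

lemma f_pos_unit: "0 < x \<Longrightarrow> x \<le> 1 \<Longrightarrow> 0 < f x"
  by (rule f_pos) auto

lemma tau_pos: "0 < x \<Longrightarrow> x \<le> 1 \<Longrightarrow> 0 < \<tau> x"
  unfolding tau_def using f_pos[of "r x"] r_pos r_le f_pos_unit by simp

definition \<tau>' :: "real \<Rightarrow> real" where
  "\<tau>' x = (f' (r x) * r' x - f' x * \<tau> x) / f x"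

lemma tau_has_deriv:
  assumes "0 < x" "x < 1"
  shows "(\<tau> has_real_derivative \<tau>' x) (at x)"
proof -
  have "0 < f x" "0 < r x" "r x \<le> max lam 1"
    using assms f_pos_unit r_pos r_le by auto
  have "((\<lambda>y. f (r y)) has_real_derivative f' (r x) * r' x) (at x)"
    by (rule DERIV_chain2[OF f_has_deriv_at r_has_deriv_at]) (use assms \<open>0 < r x\<close> in auto)
  then have "((\<lambda>y. f (r y) / f y) has_real_derivative
      (f' (r x) * r' x * f x - f (r x) * f' x) / (f x * f x)) (at x)"
    by (rule DERIV_divide[OF _ f_has_deriv_at]) (use assms \<open>0 < f x\<close> in auto)
  moreover have "(f' (r x) * r' x * f x - f (r x) * f' x) / (f x * f x) = \<tau>' x"
    unfolding \<tau>'_def tau_def using \<open>0 < f x\<close> by (simp add: field_simps)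
  ultimately show ?thesis
    unfolding tau_def[abs_def] by simp
qed

lemma continuous_on_tau: "continuous_on {0<..1} \<tau>"
proof -
  have "continuous_on {0<..1} (\<lambda>y. f (r y))"
    by (rule continuous_on_compose2[OF continuous_on_f continuous_on_r])
      (use r_pos in \<open>fastforce intro: less_imp_le\<close>)
  moreover have "continuous_on {0<..1} f"
    by (rule continuous_on_subset[OF continuous_on_f]) auto
  ultimately show ?thesis
    unfolding tau_def[abs_def] by (rule continuous_on_divide) (use f_pos_unit in fastforce)
qed

definition slope_ratio :: "real \<Rightarrow> real" where
  "slope_ratio x = r' x / \<tau> x"

definition R :: "real \<Rightarrow> real" where
  "R x = f' (r x) * \<phi>' (\<tau> x) - f' x * \<phi>' (r' x)"

definition D :: "real \<Rightarrow> real" where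
  "D x = r' x * \<tau> x ^ m"

definition D' :: "real \<Rightarrow> real" where
  "D' x = r'' x * \<tau> x ^ m + r' x * (m * \<tau> x ^ (m - 1) * \<tau>' x)"

definition N :: "real \<Rightarrow> real" where
  "N x = h' (D x) + \<phi>' (r' x) / \<tau> x ^ m"

definition N' :: "real \<Rightarrow> real" where
  "N' x = h'' (D x) * D' x
     + (\<phi>'' (r' x) * r'' x * \<tau> x ^ m - \<phi>' (r' x) * (m * \<tau> x ^ (m - 1) * \<tau>' x)) / (\<tau> x ^ m)\<^sup>2"

lemma D_pos: "0 < x \<Longrightarrow> x \<le> 1 \<Longrightarrow> 0 < D x"
  unfolding D_def using r'_pos tau_pos by simp

lemma D_has_deriv:
  assumes "0 < x" "x < 1"
  shows "(D has_real_derivative D' x) (at x)"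
proof -
  have "((\<lambda>y. \<tau> y ^ m) has_real_derivative m * \<tau> x ^ (m - 1) * \<tau>' x) (at x)"
    using DERIV_power[OF tau_has_deriv[OF assms], of m] by (simp add: algebra_simps)
  from DERIV_mult[OF r'_deriv[OF assms] this] show ?thesis
    unfolding D_def[abs_def] D'_def by (simp add: algebra_simps)
qed

lemma N_has_deriv:
  assumes "0 < x" "x < 1"
  shows "(N has_real_derivative N' x) (at x)"
proof -
  have "0 < \<tau> x"
    using tau_pos assms by simp
  have "((\<lambda>y. h' (D y)) has_real_derivative h'' (D x) * D' x) (at x)"
    by (rule DERIV_chain2[OF h'_deriv D_has_deriv[OF assms]]) (use D_pos assms in auto)
  moreover have "((\<lambda>y. \<phi>' (r' y)) has_real_derivative \<phi>'' (r' x) * r'' x) (at x)"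
    by (rule DERIV_chain2[OF phi'_deriv r'_deriv[OF assms]]) (use r'_pos assms in auto)
  moreover have "((\<lambda>y. \<tau> y ^ m) has_real_derivative m * \<tau> x ^ (m - 1) * \<tau>' x) (at x)"
    using DERIV_power[OF tau_has_deriv[OF assms], of m] by (simp add: algebra_simps)
  ultimately have "(N has_real_derivative h'' (D x) * D' x +
      (\<phi>'' (r' x) * r'' x * \<tau> x ^ m - \<phi>' (r' x) * (m * \<tau> x ^ (m - 1) * \<tau>' x)) / (\<tau> x ^ m * \<tau> x ^ m)) (at x)"
    unfolding N_def[abs_def] using \<open>0 < \<tau> x\<close> by (intro DERIV_add DERIV_divide) auto
  then show ?thesis
    by (simp add: N'_def power2_eq_square)
qed

lemma tau_powers:
  fixes t :: real
  shows "t ^ m = t * t ^ (m - 1)" "t ^ (2 * (n - 1)) = (t * t ^ (m - 1))\<^sup>2"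
    "t ^ (2 * n - 3) = t * (t ^ (m - 1))\<^sup>2"
proof -
  obtain k where k: "n = k + 2"
    using n2 le_Suc_ex by (metis add.commute)
  show "t ^ m = t * t ^ (m - 1)" "t ^ (2 * (n - 1)) = (t * t ^ (m - 1))\<^sup>2"
    "t ^ (2 * n - 3) = t * (t ^ (m - 1))\<^sup>2"
    unfolding k by (simp_all add: power_mult_distrib power_add[symmetric] power_mult[symmetric]
        mult_2 mult_2_right numeral_3_eq_3 mult.commute)
qed

lemma equilibrium_ode_factored:
  assumes "0 < x" "x < 1"
  shows "f x * (\<phi>'' (r' x) + h'' (D x) * (\<tau> x * \<tau> x ^ (m - 1))\<^sup>2) * r'' x
    = m * R x - m * (f x * \<tau>' x) * h'' (D x) * r' x * (\<tau> x * (\<tau> x ^ (m - 1))\<^sup>2)"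
proof -
  have "f' (r x) * r' x - f' x * \<tau> x = f x * \<tau>' x"
    unfolding \<tau>'_def using f_pos_unit[of x] assms by simp
  then show ?thesis
    using equilibrium_ode[OF assms] unfolding D_def R_def tau_powers by simp
qed

lemma N'_identity:
  assumes "0 < x" "x < 1"
  shows "f x * \<tau> x ^ m * N' x = m * (R x - f x * \<phi>' (r' x) * \<tau>' x / \<tau> x)"
proof -
  have "0 < \<tau> x"
    using tau_pos assms by simp
  then show ?thesis
    using equilibrium_ode_rearranged[OF _ _ equilibrium_ode_factored[OF assms], of "\<phi>' (r' x)"]
    unfolding N'_def D'_def tau_powers(1)[of "\<tau> x"] by simp
qed

lemma R_nonneg_if_tau'_r''_nonneg:
  assumes "0 < x" "x < 1" "0 \<le> \<tau>' x" "0 \<le> r'' x"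
  shows "0 \<le> R x"
proof -
  have pos: "0 < f x" "0 < \<tau> x" "0 < r' x" "0 \<le> h'' (D x)" "0 \<le> \<phi>'' (r' x)"
    using assms f_pos_unit tau_pos r'_pos h''_nonneg D_pos phi''_nonneg by auto
  have "0 \<le> f x * (\<phi>'' (r' x) + h'' (D x) * (\<tau> x * \<tau> x ^ (m - 1))\<^sup>2) * r'' x"
    using pos assms(4) by simp
  moreover have "0 \<le> m * (f x * \<tau>' x) * h'' (D x) * r' x * (\<tau> x * (\<tau> x ^ (m - 1))\<^sup>2)"
    using pos assms(3) by simp
  ultimately have "0 \<le> m * R x"
    using equilibrium_ode_factored[OF assms(1,2)] by linarith
  then show ?thesis
    using n2 by (simp add: zero_le_mult_iff)
qed

lemma R_nonpos_if_tau'_r''_nonpos: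
  assumes "0 < x" "x < 1" "\<tau>' x \<le> 0" "r'' x \<le> 0"
  shows "R x \<le> 0"
proof -
  have pos: "0 < f x" "0 < \<tau> x" "0 < r' x" "0 \<le> h'' (D x)" "0 \<le> \<phi>'' (r' x)"
    using assms f_pos_unit tau_pos r'_pos h''_nonneg D_pos phi''_nonneg by auto
  have "f x * (\<phi>'' (r' x) + h'' (D x) * (\<tau> x * \<tau> x ^ (m - 1))\<^sup>2) * r'' x \<le> 0"
    using pos assms(4) by (simp add: mult_nonneg_nonpos)
  moreover have "f x * \<tau>' x \<le> 0"
    using pos assms(3) by (simp add: mult_nonneg_nonpos)
  then have "m * (f x * \<tau>' x) * h'' (D x) * r' x * (\<tau> x * (\<tau> x ^ (m - 1))\<^sup>2) \<le> 0"
    using pos by (simp add: mult_nonneg_nonpos mult_nonpos_nonneg)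
  ultimately have "m * R x \<le> 0"
    using equilibrium_ode_factored[OF assms(1,2)] by linarith
  then show ?thesis
    using n2 by (simp add: mult_le_0_iff)
qed

lemma N'_nonpos_if_R_nonpos:
  assumes "0 < x" "x < 1" "R x \<le> 0" "0 \<le> \<tau>' x" "0 \<le> \<phi>' (r' x)"
  shows "N' x \<le> 0"
proof -
  have "0 < f x" "0 < \<tau> x"
    using assms f_pos_unit tau_pos by auto
  then have "0 \<le> f x * \<phi>' (r' x) * \<tau>' x / \<tau> x"
    using assms(4,5) by simp
  then have "f x * \<tau> x ^ m * N' x \<le> 0"
    unfolding N'_identity[OF assms(1,2)] using assms(3) by (simp add: mult_nonneg_nonpos)
  moreover have "0 < f x * \<tau> x ^ m"
    using \<open>0 < f x\<close> \<open>0 < \<tau> x\<close> by simp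
  ultimately show ?thesis
    using mult_le_cancel_left_pos[of "f x * \<tau> x ^ m" "N' x" 0] by simp
qed

lemma N'_nonneg_if_R_nonneg:
  assumes "0 < x" "x < 1" "0 \<le> R x" "\<tau>' x \<le> 0" "0 \<le> \<phi>' (r' x)"
  shows "0 \<le> N' x"
proof -
  have "0 < f x" "0 < \<tau> x"
    using assms f_pos_unit tau_pos by auto
  then have "f x * \<phi>' (r' x) * \<tau>' x / \<tau> x \<le> 0"
    using assms(4,5) by (simp add: divide_nonpos_pos mult_nonneg_nonpos)
  then have "0 \<le> f x * \<tau> x ^ m * N' x"
    unfolding N'_identity[OF assms(1,2)] using assms(3) by simp
  moreover have "0 < f x * \<tau> x ^ m"
    using \<open>0 < f x\<close> \<open>0 < \<tau> x\<close> by simp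
  ultimately show ?thesis
    by (simp add: zero_le_mult_iff)
qed

lemma f'_bounds:
  assumes "0 < x" "x \<le> \<rho>" "\<rho> \<le> 1"
  shows "b0 f' \<rho> \<le> f' x" "f' x \<le> b1 f' \<rho>" "b0 f' (r \<rho>) \<le> f' (r x)" "f' (r x) \<le> b1 f' (r \<rho>)"
    "0 < b0 f' \<rho>" "0 < b0 f' (r \<rho>)" "b0 f' \<rho> \<le> 1" "b0 f' (r \<rho>) \<le> 1"
    "1 \<le> b1 f' \<rho>" "1 \<le> b1 f' (r \<rho>)"
proof -
  have "0 < r x" "r \<rho> \<le> max lam 1"
    using assms r_pos r_le by auto
  moreover have "r x \<le> r \<rho>"
    using assms r_strict_mono[of x \<rho>] by (cases "x = \<rho>") auto
  ultimately show "b0 f' \<rho> \<le> f' x" "f' x \<le> b1 f' \<rho>" "b0 f' (r \<rho>) \<le> f' (r x)" "f' (r x) \<le> b1 f' (r \<rho>)"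
    "0 < b0 f' \<rho>" "0 < b0 f' (r \<rho>)" "b0 f' \<rho> \<le> 1" "b0 f' (r \<rho>) \<le> 1"
    "1 \<le> b1 f' \<rho>" "1 \<le> b1 f' (r \<rho>)"
    using assms b0_le le_b1 b0_pos b0_le_1 one_le_b1 by auto
qed

lemma above_alpha1_signs:
  assumes x: "0 < x" "x \<le> \<rho>" "\<rho> \<le> 1" and above: "alpha1 f' \<phi>' t0 \<rho> (r \<rho>) < slope_ratio x"
  shows "0 < \<tau>' x \<and> R x \<le> 0 \<and> (R x = 0 \<longrightarrow> \<phi>' (r' x) = 0)"
proof -
  note b = f'_bounds[OF x]
  define g where "g = slope_ratio x"
  have "0 < \<tau> x" "0 < f x" "0 < r' x"
    using x tau_pos f_pos_unit r'_pos by auto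
  then have r'x: "r' x = g * \<tau> x" and "0 < g"
    by (simp_all add: g_def slope_ratio_def)
  have g: "b1 f' \<rho> < b0 f' (r \<rho>) * g" "q1_inv \<phi>' t0 (b0 f' \<rho> / b1 f' (r \<rho>)) < g"
    using above b(6) by (simp_all add: alpha1_def g_def divide_less_eq mult.commute)
  have "b0 f' (r \<rho>) * (g * \<tau> x) \<le> f' (r x) * r' x"
    unfolding r'x using b(3) \<open>0 < \<tau> x\<close> \<open>0 < g\<close> by (intro mult_right_mono) auto
  moreover have "f' x * \<tau> x \<le> b1 f' \<rho> * \<tau> x"
    using b(2) \<open>0 < \<tau> x\<close> by (intro mult_right_mono) auto
  moreover have "b1 f' \<rho> * \<tau> x < b0 f' (r \<rho>) * (g * \<tau> x)"
    using g(1) \<open>0 < \<tau> x\<close> by (simp add: mult.assoc[symmetric])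
  ultimately have "0 < \<tau>' x"
    unfolding \<tau>'_def using \<open>0 < f x\<close> by simp
  moreover have "R x \<le> 0 \<and> (R x = 0 \<longrightarrow> \<phi>' (r' x) = 0)"
    unfolding R_def r'x
    by (rule phi'_combination_nonpos[OF \<open>0 < \<tau> x\<close> b(5,1,2) b(6,3,4)]) (use b g in auto)
  ultimately show ?thesis
    by blast
qed

lemma below_alpha0_signs:
  assumes x: "0 < x" "x \<le> \<rho>" "\<rho> \<le> 1" and below: "slope_ratio x < alpha0 f' \<phi>' t0 \<rho> (r \<rho>)"
  shows "\<tau>' x < 0 \<and> 0 \<le> R x \<and> (R x = 0 \<longrightarrow> \<phi>' (r' x) = 0)"
proof -
  note b = f'_bounds[OF x]
  define g where "g = slope_ratio x"
  have "0 < \<tau> x" "0 < f x" "0 < r' x"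
    using x tau_pos f_pos_unit r'_pos by auto
  then have r'x: "r' x = g * \<tau> x" and "0 < g"
    by (simp_all add: g_def slope_ratio_def)
  have "0 < b1 f' (r \<rho>)"
    using b(10) by simp
  then have g: "b1 f' (r \<rho>) * g < b0 f' \<rho>" "g < q0_inv \<phi>' t0 (b1 f' \<rho> / b0 f' (r \<rho>))"
    using below by (simp_all add: alpha0_def g_def less_divide_eq mult.commute)
  have "f' (r x) * r' x \<le> b1 f' (r \<rho>) * (g * \<tau> x)"
    unfolding r'x using b(4) \<open>0 < \<tau> x\<close> \<open>0 < g\<close> by (intro mult_right_mono) auto
  moreover have "b0 f' \<rho> * \<tau> x \<le> f' x * \<tau> x"
    using b(1) \<open>0 < \<tau> x\<close> by (intro mult_right_mono) auto
  moreover have "b1 f' (r \<rho>) * (g * \<tau> x) < b0 f' \<rho> * \<tau> x"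
    using g(1) \<open>0 < \<tau> x\<close> by (simp add: mult.assoc[symmetric])
  ultimately have "\<tau>' x < 0"
    unfolding \<tau>'_def using \<open>0 < f x\<close> by (simp add: divide_less_0_iff)
  moreover have "0 \<le> R x \<and> (R x = 0 \<longrightarrow> \<phi>' (r' x) = 0)"
    unfolding R_def r'x
    by (rule phi'_combination_nonneg[OF \<open>0 < \<tau> x\<close> \<open>0 < g\<close> b(5,1,2) b(6,3,4)]) (use b g in auto)
  ultimately show ?thesis
    by blast
qed

lemma continuous_on_N: "0 < a \<Longrightarrow> b < 1 \<Longrightarrow> continuous_on {a..b} N"
  by (rule continuous_at_imp_continuous_on) (auto intro!: DERIV_isCont[OF N_has_deriv])

lemma tau_strict_mono_above:
  assumes "\<rho> \<le> 1" and above: "\<And>z. a < z \<Longrightarrow> z \<le> \<rho> \<Longrightarrow> alpha1 f' \<phi>' t0 \<rho> (r \<rho>) < slope_ratio z"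
    and "a \<le> x" "0 < x" "x < y" "y \<le> \<rho>"
  shows "\<tau> x < \<tau> y"
proof (rule DERIV_pos_imp_increasing_open[OF \<open>x < y\<close>])
  fix z assume "x < z" "z < y"
  then have "0 < \<tau>' z"
    using above_alpha1_signs[of z \<rho>] above[of z] assms by auto
  then show "\<exists>d. (\<tau> has_real_derivative d) (at z) \<and> 0 < d"
    using tau_has_deriv[of z] \<open>x < z\<close> \<open>z < y\<close> assms by auto
qed (use assms in \<open>auto intro: continuous_on_subset[OF continuous_on_tau]\<close>)

lemma tau_strict_antimono_below:
  assumes "\<rho> \<le> 1" and below: "\<And>z. a < z \<Longrightarrow> z \<le> \<rho> \<Longrightarrow> slope_ratio z < alpha0 f' \<phi>' t0 \<rho> (r \<rho>)"
    and "a \<le> x" "0 < x" "x < y" "y \<le> \<rho>"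
  shows "\<tau> y < \<tau> x"
proof (rule DERIV_neg_imp_decreasing_open[OF \<open>x < y\<close>])
  fix z assume "x < z" "z < y"
  then have "\<tau>' z < 0"
    using below_alpha0_signs[of z \<rho>] below[of z] assms by auto
  then show "\<exists>d. (\<tau> has_real_derivative d) (at z) \<and> d < 0"
    using tau_has_deriv[of z] \<open>x < z\<close> \<open>z < y\<close> assms by auto
qed (use assms in \<open>auto intro: continuous_on_subset[OF continuous_on_tau]\<close>)

lemma D_strict_less:
  assumes "0 < y" "y \<le> 1" "0 < z" "z \<le> 1" "\<tau> y \<le> \<tau> z" "r' y < r' z"
  shows "D y < D z"
proof -
  have "0 < \<tau> y ^ m" "0 < r' z"
    using tau_pos r'_pos assms by auto
  moreover have "\<tau> y ^ m \<le> \<tau> z ^ m"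
    using tau_pos[of y] assms by (intro power_mono) auto
  ultimately have "r' y * \<tau> y ^ m < r' z * \<tau> y ^ m" "r' z * \<tau> y ^ m \<le> r' z * \<tau> z ^ m"
    using assms(6) by simp_all
  then show ?thesis
    unfolding D_def by linarith
qed

lemma h'_D_le_N: "0 < z \<Longrightarrow> z \<le> 1 \<Longrightarrow> 0 \<le> \<phi>' (r' z) \<Longrightarrow> h' (D z) \<le> N z"
  unfolding N_def using tau_pos[of z] by simp

lemma N_antimono_above:
  assumes "\<rho> \<le> 1" and above: "\<And>z. a < z \<Longrightarrow> z \<le> \<rho> \<Longrightarrow> alpha1 f' \<phi>' t0 \<rho> (r \<rho>) < slope_ratio z"
    and "a \<le> y" "0 < y" "y \<le> z" "z < \<rho>" and phi': "\<And>w. y < w \<Longrightarrow> w < z \<Longrightarrow> 0 \<le> \<phi>' (r' w)"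
  shows "N z \<le> N y"
proof (rule DERIV_nonpos_imp_decreasing_open[OF \<open>y \<le> z\<close>])
  fix w assume w: "y < w" "w < z"
  then have "N' w \<le> 0"
    using N'_nonpos_if_R_nonpos[of w] above_alpha1_signs[of w \<rho>] above[of w] phi'[OF w] assms
    by auto
  then show "\<exists>d. (N has_real_derivative d) (at w) \<and> d \<le> 0"
    using N_has_deriv[of w] w assms by auto
qed (use continuous_on_N assms in auto)

lemma N_mono_below:
  assumes "\<rho> \<le> 1" and below: "\<And>z. a < z \<Longrightarrow> z \<le> \<rho> \<Longrightarrow> slope_ratio z < alpha0 f' \<phi>' t0 \<rho> (r \<rho>)"
    and "a \<le> z" "0 < z" "z \<le> y" "y < \<rho>" and phi': "\<And>w. z < w \<Longrightarrow> w < y \<Longrightarrow> 0 \<le> \<phi>' (r' w)"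
  shows "N z \<le> N y"
proof (rule DERIV_nonneg_imp_increasing_open[OF \<open>z \<le> y\<close>])
  fix w assume w: "z < w" "w < y"
  then have "0 \<le> N' w"
    using N'_nonneg_if_R_nonneg[of w] below_alpha0_signs[of w \<rho>] below[of w] phi'[OF w] assms
    by auto
  then show "\<exists>d. (N has_real_derivative d) (at w) \<and> 0 \<le> d"
    using N_has_deriv[of w] w assms by auto
qed (use continuous_on_N assms in auto)

text \<open>If \<open>r''(y) > 0\<close>, the equation forces \<open>\<phi>'(r'(y)) = 0\<close>; just to the right of \<open>y\<close> the
  function \<open>N\<close> then decreases while its \<open>h'\<close>-part strictly increases and its \<open>\<phi>'\<close>-part
  stays nonnegative.\<close>
lemma r''_nonpos_above:
  assumes "\<rho> \<le> 1" and above: "\<And>z. a < z \<Longrightarrow> z \<le> \<rho> \<Longrightarrow> alpha1 f' \<phi>' t0 \<rho> (r \<rho>) < slope_ratio z"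
    and y: "0 \<le> a" "a < y" "y < \<rho>"
  shows "r'' y \<le> 0"
proof (rule ccontr)
  assume "\<not> r'' y \<le> 0"
  then have "0 < r'' y"
    by simp
  have "0 < y" "y < 1"
    using y assms by auto
  have "0 < \<tau>' y \<and> R y \<le> 0 \<and> (R y = 0 \<longrightarrow> \<phi>' (r' y) = 0)"
    using above_alpha1_signs[of y \<rho>] above[of y] y assms by auto
  then have "\<phi>' (r' y) = 0"
    using R_nonneg_if_tau'_r''_nonneg[OF \<open>0 < y\<close> \<open>y < 1\<close>] \<open>0 < r'' y\<close> by force
  obtain d where "0 < d" and d: "\<And>h. 0 < h \<Longrightarrow> h < d \<Longrightarrow> r' y < r' (y + h)"
    using DERIV_pos_inc_right[OF r'_deriv[OF \<open>0 < y\<close> \<open>y < 1\<close>] \<open>0 < r'' y\<close>] by blast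
  define z where "z = y + min d (\<rho> - y) / 2"
  have z: "y < z" "z < \<rho>" "z < y + d"
    using \<open>0 < d\<close> y by (auto simp: z_def min_def field_simps)
  have r'_gt: "r' y < r' w" if "y < w" "w \<le> z" for w
    using d[of "w - y"] that z by simp
  have phi'_after: "0 \<le> \<phi>' (r' w)" if "y < w" "w \<le> z" for w
    using phi'_mono[of "r' y" "r' w"] r'_gt[OF that] r'_pos[of y] \<open>\<phi>' (r' y) = 0\<close> \<open>0 < y\<close> \<open>y < 1\<close>
    by simp
  have "\<tau> y < \<tau> z"
    by (rule tau_strict_mono_above[OF \<open>\<rho> \<le> 1\<close> above]) (use z y in auto)
  then have "D y < D z"
    using D_strict_less[of y z] r'_gt[of z] z y assms by simp
  then have "N y < h' (D z)"
    using h'_strict_mono D_pos[of y] \<open>0 < y\<close> \<open>y < 1\<close> \<open>\<phi>' (r' y) = 0\<close> by (simp add: N_def)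
  also have "h' (D z) \<le> N z"
    using h'_D_le_N phi'_after[of z] z y assms by simp
  also have "N z \<le> N y"
    using N_antimono_above[OF \<open>\<rho> \<le> 1\<close> above] phi'_after z y by auto
  finally show False
    by simp
qed

lemma r''_nonneg_below:
  assumes "\<rho> \<le> 1" and below: "\<And>z. a < z \<Longrightarrow> z \<le> \<rho> \<Longrightarrow> slope_ratio z < alpha0 f' \<phi>' t0 \<rho> (r \<rho>)"
    and y: "0 \<le> a" "a < y" "y < \<rho>"
  shows "0 \<le> r'' y"
proof (rule ccontr)
  assume "\<not> 0 \<le> r'' y"
  then have "r'' y < 0"
    by simp
  have "0 < y" "y < 1"
    using y assms by auto
  have "\<tau>' y < 0 \<and> 0 \<le> R y \<and> (R y = 0 \<longrightarrow> \<phi>' (r' y) = 0)"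
    using below_alpha0_signs[of y \<rho>] below[of y] y assms by auto
  then have "\<phi>' (r' y) = 0"
    using R_nonpos_if_tau'_r''_nonpos[OF \<open>0 < y\<close> \<open>y < 1\<close>] \<open>r'' y < 0\<close> by force
  obtain d where "0 < d" and d: "\<And>h. 0 < h \<Longrightarrow> h < d \<Longrightarrow> r' y < r' (y - h)"
    using DERIV_neg_dec_left[OF r'_deriv[OF \<open>0 < y\<close> \<open>y < 1\<close>] \<open>r'' y < 0\<close>] by blast
  define z where "z = y - min d (y - a) / 2"
  have z: "z < y" "a < z" "y - d < z"
    using \<open>0 < d\<close> y by (auto simp: z_def min_def field_simps)
  have "0 < z"
    using z y by simp
  have r'_gt: "r' y < r' w" if "z \<le> w" "w < y" for w
    using d[of "y - w"] that z by simp
  have phi'_before: "0 \<le> \<phi>' (r' w)" if "z \<le> w" "w < y" for w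
    using phi'_mono[of "r' y" "r' w"] r'_gt[OF that] r'_pos[of y] \<open>\<phi>' (r' y) = 0\<close> \<open>0 < y\<close> \<open>y < 1\<close>
    by simp
  have "\<tau> y < \<tau> z"
    by (rule tau_strict_antimono_below[OF \<open>\<rho> \<le> 1\<close> below]) (use z y \<open>0 < z\<close> in auto)
  then have "D y < D z"
    using D_strict_less[of y z] r'_gt[of z] z y \<open>0 < z\<close> assms by simp
  then have "N y < h' (D z)"
    using h'_strict_mono D_pos[of y] \<open>0 < y\<close> \<open>y < 1\<close> \<open>\<phi>' (r' y) = 0\<close> by (simp add: N_def)
  also have "h' (D z) \<le> N z"
    using h'_D_le_N phi'_before[of z] z \<open>0 < z\<close> y assms by simp
  also have "N z \<le> N y"
    using N_mono_below[OF \<open>\<rho> \<le> 1\<close> below] phi'_before z \<open>0 < z\<close> y by auto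
  finally show False
    by simp
qed

lemma r'_antimono_above:
  assumes "\<rho> \<le> 1" and above: "\<And>z. a < z \<Longrightarrow> z \<le> \<rho> \<Longrightarrow> alpha1 f' \<phi>' t0 \<rho> (r \<rho>) < slope_ratio z"
    and "0 \<le> a" "a \<le> x" "0 < x" "x \<le> y" "y \<le> \<rho>"
  shows "r' y \<le> r' x"
proof (rule DERIV_nonpos_imp_decreasing_open[OF \<open>x \<le> y\<close>])
  fix z assume "x < z" "z < y"
  then show "\<exists>d. (r' has_real_derivative d) (at z) \<and> d \<le> 0"
    using r''_nonpos_above[OF \<open>\<rho> \<le> 1\<close> above, where y = z] r'_deriv[of z] assms by auto
qed (use assms in \<open>auto intro: continuous_on_subset[OF r'_cont]\<close>)

lemma r'_mono_below:
  assumes "\<rho> \<le> 1" and below: "\<And>z. a < z \<Longrightarrow> z \<le> \<rho> \<Longrightarrow> slope_ratio z < alpha0 f' \<phi>' t0 \<rho> (r \<rho>)"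
    and "0 \<le> a" "a \<le> x" "0 < x" "x \<le> y" "y \<le> \<rho>"
  shows "r' x \<le> r' y"
proof (rule DERIV_nonneg_imp_increasing_open[OF \<open>x \<le> y\<close>])
  fix z assume "x < z" "z < y"
  then show "\<exists>d. (r' has_real_derivative d) (at z) \<and> 0 \<le> d"
    using r''_nonneg_below[OF \<open>\<rho> \<le> 1\<close> below, where y = z] r'_deriv[of z] assms by auto
qed (use assms in \<open>auto intro: continuous_on_subset[OF r'_cont]\<close>)

lemma slope_ratio_decreasing_above:
  assumes "\<rho> \<le> 1" and above: "\<And>z. a < z \<Longrightarrow> z \<le> \<rho> \<Longrightarrow> alpha1 f' \<phi>' t0 \<rho> (r \<rho>) < slope_ratio z"
    and "0 \<le> a" "a \<le> x" "0 < x" "x < \<rho>"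
  shows "slope_ratio \<rho> < slope_ratio x"
proof -
  have "0 < r' \<rho>" "0 < \<tau> x" "\<tau> x < \<tau> \<rho>"
    using r'_pos tau_pos tau_strict_mono_above[OF \<open>\<rho> \<le> 1\<close> above] assms by auto
  then have "r' \<rho> / \<tau> \<rho> < r' \<rho> / \<tau> x"
    by (simp add: divide_strict_left_mono)
  also have "\<dots> \<le> r' x / \<tau> x"
    using r'_antimono_above[OF \<open>\<rho> \<le> 1\<close> above, where x = x and y = \<rho>] assms \<open>0 < \<tau> x\<close>
    by (simp add: divide_right_mono)
  finally show ?thesis
    unfolding slope_ratio_def .
qed

lemma slope_ratio_increasing_below:
  assumes "\<rho> \<le> 1" and below: "\<And>z. a < z \<Longrightarrow> z \<le> \<rho> \<Longrightarrow> slope_ratio z < alpha0 f' \<phi>' t0 \<rho> (r \<rho>)"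
    and "0 \<le> a" "a \<le> x" "0 < x" "x < \<rho>"
  shows "slope_ratio x < slope_ratio \<rho>"
proof -
  have "0 < r' x" "0 < \<tau> \<rho>" "\<tau> \<rho> < \<tau> x"
    using r'_pos tau_pos tau_strict_antimono_below[OF \<open>\<rho> \<le> 1\<close> below] assms by auto
  then have "r' x / \<tau> x < r' x / \<tau> \<rho>"
    by (simp add: divide_strict_left_mono)
  also have "\<dots> \<le> r' \<rho> / \<tau> \<rho>"
    using r'_mono_below[OF \<open>\<rho> \<le> 1\<close> below, where x = x and y = \<rho>] assms \<open>0 < \<tau> \<rho>\<close>
    by (simp add: divide_right_mono)
  finally show ?thesis
    unfolding slope_ratio_def .
qed

lemma r_concave_bound:
  assumes "\<rho> \<le> 1" and above: "\<And>z. 0 < z \<Longrightarrow> z \<le> \<rho> \<Longrightarrow> alpha1 f' \<phi>' t0 \<rho> (r \<rho>) < slope_ratio z"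
    and x: "0 < x" "x < \<rho>"
  shows "x * r' x \<le> r x"
proof -
  define w where "w e = r e - r' x * e" for e
  have w_le: "w e \<le> w x" if "0 < e" "e < x" for e
  proof (rule DERIV_nonneg_imp_increasing_open[of e x w])
    fix z assume "e < z" "z < x"
    have "r' x \<le> r' z"
      using r'_antimono_above[OF \<open>\<rho> \<le> 1\<close> above, where a = 0 and x = z and y = x] \<open>e < z\<close> \<open>z < x\<close> that x
      by simp
    moreover have "(w has_real_derivative r' z - r' x * 1) (at z)"
      unfolding w_def[abs_def] using \<open>e < z\<close> \<open>z < x\<close> that x assms
      by (intro DERIV_diff DERIV_cmult DERIV_ident r_has_deriv_at) auto
    ultimately show "\<exists>d. (w has_real_derivative d) (at z) \<and> 0 \<le> d"
      by force
  qed (use that x assms in \<open>auto simp: w_def intro!: continuous_intros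
        intro: continuous_on_subset[OF continuous_on_r]\<close>)
  have "(w \<longlongrightarrow> 0 - r' x * 0) (at_right 0)"
    unfolding w_def by (intro tendsto_intros r_tendsto_0)
  moreover have "eventually (\<lambda>e. w e \<le> w x) (at_right 0)"
    by (rule eventually_mono[OF eventually_at_right_real[OF x(1)]]) (use w_le in auto)
  ultimately have "0 \<le> w x"
    using tendsto_upperbound[of w 0 "at_right 0" "w x"] by simp
  then show ?thesis
    by (simp add: w_def mult.commute)
qed

lemma r_convex_bound:
  assumes "\<rho> \<le> 1" and below: "\<And>z. 0 < z \<Longrightarrow> z \<le> \<rho> \<Longrightarrow> slope_ratio z < alpha0 f' \<phi>' t0 \<rho> (r \<rho>)"
    and x: "0 < x" "x < \<rho>"
  shows "r x \<le> x * r' x"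
proof -
  define w where "w e = r e - r' x * e" for e
  have w_ge: "w x \<le> w e" if "0 < e" "e < x" for e
  proof (rule DERIV_nonpos_imp_decreasing_open[of e x w])
    fix z assume "e < z" "z < x"
    have "r' z \<le> r' x"
      using r'_mono_below[OF \<open>\<rho> \<le> 1\<close> below, where a = 0 and x = z and y = x] \<open>e < z\<close> \<open>z < x\<close> that x
      by simp
    moreover have "(w has_real_derivative r' z - r' x * 1) (at z)"
      unfolding w_def[abs_def] using \<open>e < z\<close> \<open>z < x\<close> that x assms
      by (intro DERIV_diff DERIV_cmult DERIV_ident r_has_deriv_at) auto
    ultimately show "\<exists>d. (w has_real_derivative d) (at z) \<and> d \<le> 0"
      by force
  qed (use that x assms in \<open>auto simp: w_def intro!: continuous_intros
        intro: continuous_on_subset[OF continuous_on_r]\<close>)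
  have "(w \<longlongrightarrow> 0 - r' x * 0) (at_right 0)"
    unfolding w_def by (intro tendsto_intros r_tendsto_0)
  moreover have "eventually (\<lambda>e. w x \<le> w e) (at_right 0)"
    by (rule eventually_mono[OF eventually_at_right_real[OF x(1)]]) (use w_ge in auto)
  ultimately have "w x \<le> 0"
    using tendsto_lowerbound[of w 0 "at_right 0" "w x"] by simp
  then show ?thesis
    by (simp add: w_def mult.commute)
qed

lemma f_quotient_tendsto: "((\<lambda>x. (f x / x) / (f (r x) / r x)) \<longlongrightarrow> 1) (at_right 0)"
proof -
  have "eventually (\<lambda>x. 0 < r x) (at_right 0)"
    by (rule eventually_mono[OF eventually_at_right_real[OF zero_less_one]]) (auto intro: r_pos)
  then have "filterlim r (at_right 0) (at_right 0)"
    by (rule tendsto_imp_filterlim_at_right[OF r_tendsto_0])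
  then have "((\<lambda>x. f (r x) / r x) \<longlongrightarrow> 1) (at_right 0)"
    using filterlim_compose[OF f_over_id_tendsto] by blast
  from tendsto_divide[OF f_over_id_tendsto this] show ?thesis
    by simp
qed

lemma slope_ratio_eq:
  assumes "0 < x" "x \<le> 1"
  shows "slope_ratio x = (x * r' x / r x) * ((f x / x) / (f (r x) / r x))"
  using r_pos[OF assms] assms unfolding slope_ratio_def tau_def by simp

lemma slope_ratio_le_f_quotient:
  assumes "0 < x" "x \<le> 1" "x * r' x \<le> r x"
  shows "slope_ratio x \<le> (f x / x) / (f (r x) / r x)"
proof -
  have "0 < r x" "0 < f (r x)" "0 < f x"
    using r_pos r_le f_pos[of "r x"] f_pos_unit assms by auto
  then have "0 \<le> (f x / x) / (f (r x) / r x)" "x * r' x / r x \<le> 1"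
    using assms by simp_all
  then show ?thesis
    unfolding slope_ratio_eq[OF assms(1,2)] using mult_right_mono by fastforce
qed

lemma f_quotient_le_slope_ratio:
  assumes "0 < x" "x \<le> 1" "r x \<le> x * r' x"
  shows "(f x / x) / (f (r x) / r x) \<le> slope_ratio x"
proof -
  have "0 < r x" "0 < f (r x)" "0 < f x"
    using r_pos r_le f_pos[of "r x"] f_pos_unit assms by auto
  then have "0 \<le> (f x / x) / (f (r x) / r x)" "1 \<le> x * r' x / r x"
    using assms by simp_all
  then show ?thesis
    unfolding slope_ratio_eq[OF assms(1,2)] using mult_right_mono by fastforce
qed

lemma continuous_on_slope_ratio: "\<rho> \<le> 1 \<Longrightarrow> continuous_on {0<..\<rho>} slope_ratio"
  unfolding slope_ratio_def[abs_def]
  by (intro continuous_on_divide continuous_on_subset[OF r'_cont] continuous_on_subset[OF continuous_on_tau])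
    (use tau_pos in fastforce)+

lemma one_le_alpha1: "0 < \<rho> \<Longrightarrow> \<rho> \<le> 1 \<Longrightarrow> 1 \<le> alpha1 f' \<phi>' t0 \<rho> (r \<rho>)"
  using f'_bounds[of \<rho> \<rho>] unfolding alpha1_def by (simp add: max.coboundedI1)

lemma alpha0_le_one: "0 < \<rho> \<Longrightarrow> \<rho> \<le> 1 \<Longrightarrow> alpha0 f' \<phi>' t0 \<rho> (r \<rho>) \<le> 1"
  using f'_bounds[of \<rho> \<rho>] unfolding alpha0_def by (simp add: min.coboundedI1)

lemma slope_ratio_le_alpha1:
  assumes "0 < \<rho>" "\<rho> \<le> 1"
  shows "slope_ratio \<rho> \<le> alpha1 f' \<phi>' t0 \<rho> (r \<rho>)"
proof (rule ccontr)
  let ?A = "alpha1 f' \<phi>' t0 \<rho> (r \<rho>)"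
  assume "\<not> slope_ratio \<rho> \<le> ?A"
  then have "?A < slope_ratio \<rho>"
    by simp
  then obtain a where a: "0 \<le> a" "a < \<rho>" and above: "\<And>z. a < z \<Longrightarrow> z \<le> \<rho> \<Longrightarrow> ?A < slope_ratio z"
    and crossing: "0 < a \<Longrightarrow> slope_ratio a \<le> ?A"
    using last_crossing_above[OF continuous_on_slope_ratio[OF assms(2)] assms(1)] by blast
  show False
  proof (cases "a = 0")
    case False
    then show False
      using slope_ratio_decreasing_above[OF assms(2) above a(1) order_refl] crossing a
        \<open>\<not> slope_ratio \<rho> \<le> ?A\<close> by simp
  next
    case True
    have "eventually (\<lambda>x. slope_ratio \<rho> \<le> (f x / x) / (f (r x) / r x)) (at_right 0)"
    proof (rule eventually_mono[OF eventually_at_right_real[OF assms(1)]])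
      fix x assume x: "x \<in> {0<..<\<rho>}"
      have "slope_ratio \<rho> < slope_ratio x"
        using slope_ratio_decreasing_above[OF assms(2) above a(1)] True x by simp
      also have "\<dots> \<le> (f x / x) / (f (r x) / r x)"
        using slope_ratio_le_f_quotient r_concave_bound[OF assms(2) above[unfolded True]] x assms
        by simp
      finally show "slope_ratio \<rho> \<le> (f x / x) / (f (r x) / r x)"
        by simp
    qed
    then have "slope_ratio \<rho> \<le> 1"
      using tendsto_lowerbound[OF f_quotient_tendsto] by simp
    then show False
      using one_le_alpha1[OF assms] \<open>\<not> slope_ratio \<rho> \<le> ?A\<close> by simp
  qed
qed

lemma alpha0_le_slope_ratio:
  assumes "0 < \<rho>" "\<rho> \<le> 1"
  shows "alpha0 f' \<phi>' t0 \<rho> (r \<rho>) \<le> slope_ratio \<rho>"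
proof (rule ccontr)
  let ?B = "alpha0 f' \<phi>' t0 \<rho> (r \<rho>)"
  assume "\<not> ?B \<le> slope_ratio \<rho>"
  then have "- ?B < - slope_ratio \<rho>"
    by simp
  moreover have "continuous_on {0<..\<rho>} (\<lambda>x. - slope_ratio x)"
    using continuous_on_slope_ratio[OF assms(2)] by (rule continuous_on_minus)
  ultimately obtain a where a: "0 \<le> a" "a < \<rho>" and below': "\<And>z. a < z \<Longrightarrow> z \<le> \<rho> \<Longrightarrow> - ?B < - slope_ratio z"
    and crossing': "0 < a \<Longrightarrow> - slope_ratio a \<le> - ?B"
    using last_crossing_above[of \<rho> "\<lambda>x. - slope_ratio x" "- ?B"] assms(1) by blast
  have below: "\<And>z. a < z \<Longrightarrow> z \<le> \<rho> \<Longrightarrow> slope_ratio z < ?B" and crossing: "0 < a \<Longrightarrow> ?B \<le> slope_ratio a"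
    using below' crossing' by simp_all
  show False
  proof (cases "a = 0")
    case False
    then show False
      using slope_ratio_increasing_below[OF assms(2) below a(1) order_refl] crossing a
        \<open>\<not> ?B \<le> slope_ratio \<rho>\<close> by simp
  next
    case True
    have "eventually (\<lambda>x. (f x / x) / (f (r x) / r x) \<le> slope_ratio \<rho>) (at_right 0)"
    proof (rule eventually_mono[OF eventually_at_right_real[OF assms(1)]])
      fix x assume x: "x \<in> {0<..<\<rho>}"
      have "(f x / x) / (f (r x) / r x) \<le> slope_ratio x"
        using f_quotient_le_slope_ratio r_convex_bound[OF assms(2) below[unfolded True]] x assms
        by simp
      also have "\<dots> < slope_ratio \<rho>"
        using slope_ratio_increasing_below[OF assms(2) below a(1)] True x by simp
      finally show "(f x / x) / (f (r x) / r x) \<le> slope_ratio \<rho>"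
        by simp
    qed
    then have "1 \<le> slope_ratio \<rho>"
      using tendsto_upperbound[OF f_quotient_tendsto] by simp
    then show False
      using alpha0_le_one[OF assms] \<open>\<not> ?B \<le> slope_ratio \<rho>\<close> by simp
  qed
qed

end

theorem theorem4p2:
  fixes n :: nat and \<kappa> f f1 \<phi> phi1 phi2 h h1 h2 r r1 r2 :: "real \<Rightarrow> real"
    and lam t0 :: real
  assumes n2: "n \<ge> 2"
    and kappa_cont: "continuous_on {0..} \<kappa>"
    and f_deriv: "\<And>x. x \<ge> 0 \<Longrightarrow> (f has_real_derivative f1 x) (at x within {0..})"
    and f1_deriv: "\<And>x. x \<ge> 0 \<Longrightarrow> (f1 has_real_derivative (- \<kappa> x * f x)) (at x within {0..})"
    and f0: "f 0 = 0" and f1_0: "f1 0 = 1"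
    and lam_pos: "lam > 0"
    and mu: "mu_plus \<kappa> (max lam 1) \<le> 1"
    (* (A1) *)
    and h_deriv: "\<And>v. v > 0 \<Longrightarrow> (h has_real_derivative h1 v) (at v)"
    and h1_deriv: "\<And>v. v > 0 \<Longrightarrow> (h1 has_real_derivative h2 v) (at v)"
    and h2_cont: "continuous_on {0<..} h2"
    and h_strict: "strictly_convex_on {0<..} h"
    (* (A4) *)
    and phi_pos: "\<And>v. v > 0 \<Longrightarrow> \<phi> v > 0"
    and phi_deriv: "\<And>v. v > 0 \<Longrightarrow> (\<phi> has_real_derivative phi1 v) (at v)"
    and phi1_deriv: "\<And>v. v > 0 \<Longrightarrow> (phi1 has_real_derivative phi2 v) (at v)"
    and phi2_cont: "continuous_on {0<..} phi2"
    and phi_convex: "convex_on {0<..} \<phi>"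
    (* (A5) *)
    and A5: "mono_on {0<..} (\<lambda>v. v * phi1 v)"
    (* (A6) *)
    and t0_nonneg: "t0 \<ge> 0"
    and phi1_t0: "(t0 > 0 \<and> phi1 t0 = 0) \<or> (t0 = 0 \<and> (phi1 \<longlongrightarrow> 0) (at_right 0))"
    and q1_C1: "\<exists>dq. continuous_on {1..} dq \<and>
                 (\<forall>s\<ge>1. (q1 phi1 t0 has_real_derivative dq s) (at s within {1..}) \<and> dq s < 0)"
    and q0_C1: "\<exists>dq. continuous_on {0<..1} dq \<and>
                 (\<forall>s. 0 < s \<and> s \<le> 1 \<longrightarrow>
                    (q0 phi1 t0 has_real_derivative dq s) (at s within {0<..1}) \<and> dq s < 0)"
    and q1_lim: "(q1 phi1 t0 \<longlongrightarrow> 0) at_top"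
    and q0_lim: "filterlim (q0 phi1 t0) at_top (at_right 0)"
    (* r is a regular equilibrium solution with r(1) = lambda *)
    and r_deriv: "\<And>\<rho>. 0 < \<rho> \<Longrightarrow> \<rho> \<le> 1 \<Longrightarrow> (r has_real_derivative r1 \<rho>) (at \<rho> within {0<..1})"
    and r1_cont: "continuous_on {0<..1} r1"
    and r1_deriv: "\<And>\<rho>. 0 < \<rho> \<Longrightarrow> \<rho> < 1 \<Longrightarrow> (r1 has_real_derivative r2 \<rho>) (at \<rho>)"
    and r1_pos: "\<And>\<rho>. 0 < \<rho> \<Longrightarrow> \<rho> \<le> 1 \<Longrightarrow> r1 \<rho> > 0"
    and r_regular: "(r \<longlongrightarrow> 0) (at_right 0)"
    and r_1: "r 1 = lam"
    and r_ode: "\<And>\<rho>. 0 < \<rho> \<Longrightarrow> \<rho> < 1 \<Longrightarrow>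
       f \<rho> * (phi2 (r1 \<rho>) + h2 (r1 \<rho> * tau f r \<rho> ^ (n - 1)) * tau f r \<rho> ^ (2 * (n - 1))) * r2 \<rho>
       = real (n - 1) * (f1 (r \<rho>) * phi1 (tau f r \<rho>) - f1 \<rho> * phi1 (r1 \<rho>))
         - real (n - 1) * (f1 (r \<rho>) * r1 \<rho> - f1 \<rho> * tau f r \<rho>)
             * h2 (r1 \<rho> * tau f r \<rho> ^ (n - 1)) * r1 \<rho> * tau f r \<rho> ^ (2 * n - 3)"
  shows "\<forall>\<rho>. 0 < \<rho> \<and> \<rho> \<le> 1 \<longrightarrow>
           alpha0 f1 phi1 t0 \<rho> (r \<rho>) * tau f r \<rho> \<le> r1 \<rho> \<and>
           r1 \<rho> \<le> alpha1 f1 phi1 t0 \<rho> (r \<rho>) * tau f r \<rho>"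
proof -
  obtain q1' where q1': "\<forall>s\<ge>1. (q1 phi1 t0 has_real_derivative q1' s) (at s within {1..}) \<and> q1' s < 0"
    using q1_C1 by blast
  obtain q0' where q0': "\<forall>s. 0 < s \<and> s \<le> 1 \<longrightarrow>
      (q0 phi1 t0 has_real_derivative q0' s) (at s within {0<..1}) \<and> q0' s < 0"
    using q0_C1 by blast
  interpret equilibrium \<kappa> f f1 lam \<phi> phi1 phi2 q1' q0' t0 n h h1 h2 r r1 r2
    by unfold_locales (use assms q1' q0' in simp_all)
  show ?thesis
  proof (intro allI impI)
    fix \<rho> :: real assume "0 < \<rho> \<and> \<rho> \<le> 1"
    then have "0 < \<tau> \<rho>" "alpha0 f1 phi1 t0 \<rho> (r \<rho>) \<le> r1 \<rho> / \<tau> \<rho>"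
      "r1 \<rho> / \<tau> \<rho> \<le> alpha1 f1 phi1 t0 \<rho> (r \<rho>)"
      using alpha0_le_slope_ratio[of \<rho>] slope_ratio_le_alpha1[of \<rho>] tau_pos[of \<rho>]
      by (simp_all add: slope_ratio_def)
    then show "alpha0 f1 phi1 t0 \<rho> (r \<rho>) * tau f r \<rho> \<le> r1 \<rho> \<and> r1 \<rho> \<le> alpha1 f1 phi1 t0 \<rho> (r \<rho>) * tau f r \<rho>"
      by (simp add: pos_le_divide_eq pos_divide_le_eq)
  qed
qed

end
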